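(* Let $g\in W(\mathsf D_n)$, written as a product $g=\beta_1\cdots\beta_R$ of disjoint signed permutation cycles, and let $\Lambda$ be the number of $i$ with $\sigma(\beta_i)=-1$. Let $\langle g\rangle$ act on $\mathrm{Pic}(\bar X)=\bigoplus_{i=-1}^n\mathbb Z l_i$ via $\Phi$. Then $$\mathrm H^1(\langle g\rangle,\mathrm{Pic}(\bar X))=\begin{cases}0,&\Lambda=0\text{ or }\Lambda=2,\\ (\mathbb Z/2)^{\Lambda-2},&\text{otherwise.}\end{cases}$$
   Context: $W(\mathsf B_n)$ is the group of signed permutations of the symbols $j^\pm$ ($j=1,\dots,n$), generated by $\mathfrak S_n$ and involutions $c_j$ exchanging $j^+,j^-$; each element is $c_{j_1}\cdots c_{j_t}\tau$ with distinct $j_i$, $\tau\in\mathfrak S_n$; $\sigma(c_{j_1}\cdots c_{j_t}\tau)=(-1)^t$, $W(\mathsf D_n)=\ker\sigma$. Decomposing $\tau$ into disjoint cycles $\gamma$ (including fixed points), the signed permutation cycles of $g$ are $\beta_\gamma=(\prod_{j_i\in\mathrm{supp}\,\gamma}c_{j_i})\gamma$, and $\sigma(\beta_\gamma)=(-1)^{\#\{j_i\in\mathrm{supp}\,\gamma\}}$. $\mathrm{Pic}(\bar X)$ is the geometric Picard lattice of a standard conic bundle over $\mathbb P^1$ with $n$ degenerate fibers, with basis $l_{-1},l_0,l_1,\dots,l_n$ ($l_0$ the fiber class, $l_j$ a component of the $j$-th degenerate fiber). For $g=c_{j_1}\cdots c_{j_t}\tau$ with $t$ even, let $s(i)=-1$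 if $i\in\{j_1,\dots,j_t\}$, else $1$; then $\Phi(g)l_0=l_0$, $\Phi(g)l_{-1}=l_{-1}+\frac t2l_0-\sum_{s(i)=-1}l_i$, and for $v\ge1$, $u=\tau^{-1}(v)$: $\Phi(g)l_v=l_u$ if $s(u)=1$, $\Phi(g)l_v=l_0-l_u$ if $s(u)=-1$. *)

theory Defs
  imports Main "HOL-Algebra.Algebra"
begin

text \<open>An element g = c_{j_1} ... c_{j_t} tau of W(B_n) is encoded by the pair (tau, S)
  with tau a permutation of {1..n} and S = {j_1,...,j_t} a subset of {1..n}.
  g lies in W(D_n) iff card S is even.\<close>

definition in_WD :: "nat \<Rightarrow> (nat \<Rightarrow> nat) \<Rightarrow> nat set \<Rightarrow> bool" where
  "in_WD n \<tau> S \<longleftrightarrow> \<tau> permutes {1..n} \<and> S \<subseteq> {1..n} \<and> even (card S)"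

definition tau_cycles :: "nat \<Rightarrow> (nat \<Rightarrow> nat) \<Rightarrow> nat set set" where
  "tau_cycles n \<tau> = (\<lambda>i. {(\<tau> ^^ k) i | k. True}) ` {1..n}"

text \<open>Lambda: the number of signed permutation cycles beta_gamma with sigma(beta_gamma) = -1.\<close>
definition Lambda :: "nat \<Rightarrow> (nat \<Rightarrow> nat) \<Rightarrow> nat set \<Rightarrow> nat" where
  "Lambda n \<tau> S = card {\<gamma> \<in> tau_cycles n \<tau>. odd (card (S \<inter> \<gamma>))}"

text \<open>The lattice Pic(X) = direct sum of Z l_i, i = -1..n, as integer vectors indexed by int.\<close>
definition pic :: "nat \<Rightarrow> (int \<Rightarrow> int) set" where
  "pic n = {x. \<forall>i. i \<notin> {-1..int n} \<longrightarrow> x i = 0}"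

definition basis_l :: "int \<Rightarrow> (int \<Rightarrow> int)" where
  "basis_l i = (\<lambda>j. if j = i then 1 else 0)"

definition Phi_basis :: "nat \<Rightarrow> (nat \<Rightarrow> nat) \<Rightarrow> nat set \<Rightarrow> int \<Rightarrow> (int \<Rightarrow> int)" where
  "Phi_basis n \<tau> S i =
    (if i = -1 then
       (\<lambda>j. basis_l (-1) j + int (card S div 2) * basis_l 0 j - (\<Sum>s\<in>S. basis_l (int s) j))
     else if i = 0 then basis_l 0
     else (let u = inv_into {1..n} \<tau> (nat i) in
           if u \<in> S then (\<lambda>j. basis_l 0 j - basis_l (int u) j) else basis_l (int u)))"

definition Phi :: "nat \<Rightarrow> (nat \<Rightarrow> nat) \<Rightarrow> nat set \<Rightarrow> (int \<Rightarrow> int) \<Rightarrow> (int \<Rightarrow> int)" where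
  "Phi n \<tau> S x = (\<lambda>j. \<Sum>i\<in>{-1..int n}. x i * Phi_basis n \<tau> S i j)"

text \<open>The cyclic group <g>, realised through its (faithful) action on Pic(X): the set of
  powers of Phi(g).\<close>
definition cyc :: "nat \<Rightarrow> (nat \<Rightarrow> nat) \<Rightarrow> nat set \<Rightarrow> ((int \<Rightarrow> int) \<Rightarrow> (int \<Rightarrow> int)) set" where
  "cyc n \<tau> S = {Phi n \<tau> S ^^ k | k. True}"

definition cocycles :: "nat \<Rightarrow> ((int \<Rightarrow> int) \<Rightarrow> (int \<Rightarrow> int)) set
     \<Rightarrow> (((int \<Rightarrow> int) \<Rightarrow> (int \<Rightarrow> int)) \<Rightarrow> (int \<Rightarrow> int)) set" where
  "cocycles n G = {f \<in> G \<rightarrow>\<^sub>E pic n. \<forall>a\<in>G. \<forall>b\<in>G. f (a \<circ> b) = (\<lambda>j. f a j + a (f b) j)}"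

definition coboundaries :: "nat \<Rightarrow> ((int \<Rightarrow> int) \<Rightarrow> (int \<Rightarrow> int)) set
     \<Rightarrow> (((int \<Rightarrow> int) \<Rightarrow> (int \<Rightarrow> int)) \<Rightarrow> (int \<Rightarrow> int)) set" where
  "coboundaries n G = {(\<lambda>a\<in>G. (\<lambda>j. a m j - m j)) | m. m \<in> pic n}"

definition cocycle_group :: "nat \<Rightarrow> ((int \<Rightarrow> int) \<Rightarrow> (int \<Rightarrow> int)) set
     \<Rightarrow> (((int \<Rightarrow> int) \<Rightarrow> (int \<Rightarrow> int)) \<Rightarrow> (int \<Rightarrow> int)) monoid" where
  "cocycle_group n G = \<lparr>carrier = cocycles n G,
                         monoid.mult = (\<lambda>f h. \<lambda>a\<in>G. (\<lambda>j. f a j + h a j)),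
                         one = (\<lambda>a\<in>G. (\<lambda>j. 0))\<rparr>"

definition H1 :: "nat \<Rightarrow> ((int \<Rightarrow> int) \<Rightarrow> (int \<Rightarrow> int)) set
     \<Rightarrow> ((((int \<Rightarrow> int) \<Rightarrow> (int \<Rightarrow> int)) \<Rightarrow> (int \<Rightarrow> int)) set) monoid" where
  "H1 n G = cocycle_group n G Mod coboundaries n G"

end

theory Submission
  imports Defs "HOL-Combinatorics.Orbits"
begin

text \<open>Write \<open>p = \<Phi>(g)\<close>. A cocycle of the cyclic group \<open>\<langle>p\<rangle>\<close> is determined by
  \<open>x = f(p)\<close>, and every \<open>p\<close>-invariant linear form vanishes on \<open>x\<close> because \<open>p\<close> has finite
  order; so \<open>H\<^sup>1\<close> is the group of such \<open>x\<close> modulo the image of \<open>p - 1\<close>. On the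
  coordinates \<open>x\<^sub>1, \<dots>, x\<^sub>n\<close> the map \<open>p\<close> acts, up to multiples of \<open>x\<^sub>-\<^sub>1\<close>, as the signed
  permutation \<open>(\<tau>, S)\<close>. Besides
  \<open>x\<^sub>-\<^sub>1\<close> and \<open>2x\<^sub>0 + \<Sigma> x\<^sub>u\<close>, every cycle of \<open>\<tau>\<close> containing an even number of elements of
  \<open>S\<close> carries an invariant form (the sum of \<open>x\<close> over the cycle weighted by path signs).
  Solving \<open>x = p z - z\<close> cycle by cycle shows that \<open>x\<close> lies in the image of \<open>p - 1\<close> iff
  these forms vanish and the sums of \<open>x\<close> over the \<open>\<Lambda>\<close> remaining (odd) cycles all have the
  same parity. The number of odd cycles with odd sum is always even, every such
  even-weight parity pattern occurs, and adding \<open>(p - 1) l\<^sub>-\<^sub>1\<close> flips all parities at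
  once; hence \<open>H\<^sup>1\<close> is the even-weight subspace of \<open>(\<int>/2)\<^sup>\<Lambda>\<close> modulo the all-ones vector,
  i.e. \<open>(\<int>/2)\<^sup>\<Lambda>\<^sup>-\<^sup>2\<close> (trivial for \<open>\<Lambda> \<in> {0, 2}\<close>).\<close>

section \<open>Parity counting\<close>

lemma prod_plus_minus_one:
  assumes "finite A" "\<And>k. k \<in> A \<Longrightarrow> g k = 1 \<or> g k = (-1::int)"
  shows "prod g A = 1 \<or> prod g A = -1"
  using assms
proof (induction A rule: finite_induct)
  case (insert x F)
  then have "g x = 1 \<or> g x = -1" "prod g F = 1 \<or> prod g F = -1"
    by auto
  with insert(1,2) show ?case
    by (elim disjE) simp_all
qed simp

lemma all_agree_if_even_count:
  fixes s :: "nat \<Rightarrow> bool"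
  assumes L: "even L" and agree: "\<And>i. i < L - 2 \<Longrightarrow> s i = s (L - 2)"
    and count: "even (card {i. i < L \<and> s i})" and i: "i < L"
  shows "s i = s (L - 2)"
proof -
  define m where "m = L - 2"
  have "L \<ge> 2"
    using L i by presburger
  then have L_eq: "L = Suc (Suc m)" and "even m"
    using L unfolding m_def by simp_all
  have "{i. i < Suc m \<and> s i} = (if s m then {..<Suc m} else {})"
    using agree unfolding m_def[symmetric] by (auto simp: less_Suc_eq)
  moreover have "{i. i < L \<and> s i} = {i. i < Suc m \<and> s i} \<union> (if s (Suc m) then {Suc m} else {})"
    unfolding L_eq by (auto simp: less_Suc_eq)
  ultimately have "card {i. i < L \<and> s i} = (if s m then Suc m else 0) + (if s (Suc m) then 1 else 0)"
    by (simp add: card_Un_disjoint)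
  with count \<open>even m\<close> have "s (Suc m) = s m"
    by (cases "s m"; cases "s (Suc m)") simp_all
  with agree i show ?thesis
    unfolding m_def[symmetric] L_eq by (cases "i < m") (auto simp: less_Suc_eq)
qed

lemma even_completion:
  fixes L :: nat
  assumes T: "T \<subseteq> {..<L - 2}"
  obtains J where "J \<subseteq> {..<L}" "L - 2 \<notin> J" "even (card J)" "\<And>i. i < L - 2 \<Longrightarrow> i \<in> J \<longleftrightarrow> i \<in> T"
proof
  define J where "J = (if odd (card T) then insert (L - 1) T else T)"
  have "finite T"
    using T by (rule finite_subset) simp
  moreover have "L - 1 \<notin> T"
    using T by auto
  ultimately show "even (card J)"
    unfolding J_def by simp
  have "T = {} \<or> 0 < L"
    using T by fastforce
  then show "J \<subseteq> {..<L}" "L - 2 \<notin> J" "\<And>i. i < L - 2 \<Longrightarrow> i \<in> J \<longleftrightarrow> i \<in> T"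
    using T unfolding J_def by auto
qed

section \<open>The lattice and the cohomology of a finite cyclic group\<close>

lemma pic_add: "x \<in> pic n \<Longrightarrow> y \<in> pic n \<Longrightarrow> (\<lambda>j. x j + y j) \<in> pic n"
  and pic_diff: "x \<in> pic n \<Longrightarrow> y \<in> pic n \<Longrightarrow> (\<lambda>j. x j - y j) \<in> pic n"
  and pic_smult: "x \<in> pic n \<Longrightarrow> (\<lambda>j. c * x j) \<in> pic n"
  and pic_zero: "(\<lambda>j. 0) \<in> pic n"
  unfolding pic_def by auto

lemma basis_l_apply: "basis_l i j = (if j = i then 1 else 0)"
  by (simp add: basis_l_def)

lemma basis_l_pic: "i \<in> {-1..int n} \<Longrightarrow> basis_l i \<in> pic n"
  unfolding pic_def basis_l_def by auto

lemma pic_range: "{-1..int n} = insert (-1) (insert 0 (int ` {1..n}))"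
proof -
  have "i \<in> insert (-1) (insert 0 (int ` {1..n}))" if "i \<in> {-1..int n}" for i
  proof (cases "i = -1 \<or> i = 0")
    case False
    then have "nat i \<in> {1..n}" "i = int (nat i)"
      using that by auto
    then show ?thesis by blast
  qed auto
  then show ?thesis by (auto; blast)
qed

lemma pic_expand:
  assumes x: "x \<in> pic n"
  shows "x = (\<lambda>j. \<Sum>i\<in>{-1..int n}. x i * basis_l i j)"
proof
  fix j
  show "x j = (\<Sum>i\<in>{-1..int n}. x i * basis_l i j)"
  proof (cases "j \<in> {-1..int n}")
    case True
    have "(\<Sum>i\<in>{-1..int n}. x i * basis_l i j) = (\<Sum>i\<in>{-1..int n}. if i = j then x j else 0)"
      by (rule sum.cong) (auto simp: basis_l_apply)
    also have "\<dots> = x j"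
      using True by simp
    finally show ?thesis by simp
  next
    case False
    then show ?thesis
      using x by (auto simp: pic_def basis_l_apply intro!: sum.neutral)
  qed
qed

lemma carrier_cocycle_group: "carrier (cocycle_group n G) = cocycles n G"
  by (simp add: cocycle_group_def)

locale cyclic_pic_action =
  fixes n :: nat and p :: "(int \<Rightarrow> int) \<Rightarrow> int \<Rightarrow> int"
  assumes additive: "p (\<lambda>j. x j + y j) = (\<lambda>j. p x j + p y j)"
    and maps_pic: "x \<in> pic n \<Longrightarrow> p x \<in> pic n"
    and finite_powers: "finite {p ^^ k | k. True}"
begin

definition powers :: "((int \<Rightarrow> int) \<Rightarrow> int \<Rightarrow> int) set" where
  "powers = {p ^^ k | k. True}"

lemma powers_iff: "a \<in> powers \<longleftrightarrow> (\<exists>k. a = p ^^ k)"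
  unfolding powers_def by auto

lemma funpow_in_powers: "p ^^ k \<in> powers"
  unfolding powers_iff by blast

lemma id_in_powers: "id \<in> powers"
  using funpow_in_powers[of 0] by simp

lemma generator_in_powers: "p \<in> powers"
  using funpow_in_powers[of 1] by simp

lemma comp_in_powers: "a \<in> powers \<Longrightarrow> b \<in> powers \<Longrightarrow> a \<circ> b \<in> powers"
  unfolding powers_iff by (metis funpow_add)

lemma funpow_additive: "(p ^^ k) (\<lambda>j. x j + y j) = (\<lambda>j. (p ^^ k) x j + (p ^^ k) y j)"
  by (induction k) (simp_all add: additive)

lemma powers_additive: "a \<in> powers \<Longrightarrow> a (\<lambda>j. x j + y j) = (\<lambda>j. a x j + a y j)"
  unfolding powers_iff using funpow_additive by blast

lemma powers_zero: "a \<in> powers \<Longrightarrow> a (\<lambda>j. 0) = (\<lambda>j. 0)"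
  using powers_additive[of a "\<lambda>j. 0" "\<lambda>j. 0"] by (simp add: fun_eq_iff)

lemma powers_diff: "a \<in> powers \<Longrightarrow> a (\<lambda>j. x j - y j) = (\<lambda>j. a x j - a y j)"
  using powers_additive[of a "\<lambda>j. x j - y j" y] by (simp add: fun_eq_iff)

lemma powers_minus: "a \<in> powers \<Longrightarrow> a (\<lambda>j. - x j) = (\<lambda>j. - a x j)"
  using powers_diff[of a "\<lambda>j. 0" x] powers_zero[of a] by (simp add: fun_eq_iff)

lemma powers_double: "a \<in> powers \<Longrightarrow> a (\<lambda>j. 2 * x j) = (\<lambda>j. 2 * a x j)"
  unfolding mult_2 by (rule powers_additive)

lemma funpow_pic: "x \<in> pic n \<Longrightarrow> (p ^^ k) x \<in> pic n"
  by (induction k) (simp_all add: maps_pic)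

lemma powers_pic: "a \<in> powers \<Longrightarrow> x \<in> pic n \<Longrightarrow> a x \<in> pic n"
  unfolding powers_iff using funpow_pic by blast

lemma cocycle_comp:
  "f \<in> cocycles n powers \<Longrightarrow> a \<in> powers \<Longrightarrow> b \<in> powers \<Longrightarrow> f (a \<circ> b) = (\<lambda>j. f a j + a (f b) j)"
  unfolding cocycles_def by simp

lemma cocycle_undefined: "f \<in> cocycles n powers \<Longrightarrow> a \<notin> powers \<Longrightarrow> f a = undefined"
  unfolding cocycles_def by (auto simp: PiE_def extensional_def)

lemma cocycle_pic: "f \<in> cocycles n powers \<Longrightarrow> a \<in> powers \<Longrightarrow> f a \<in> pic n"
  unfolding cocycles_def by auto

lemma cocycle_id:
  assumes "f \<in> cocycles n powers"
  shows "f id = (\<lambda>j. 0)"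
proof
  fix j
  have "f (id \<circ> id) = (\<lambda>j. f id j + id (f id) j)"
    by (rule cocycle_comp[OF assms id_in_powers id_in_powers])
  then have "f id = (\<lambda>j. f id j + f id j)"
    by (simp only: id_comp id_apply)
  from fun_cong[OF this, of j] have "f id j = f id j + f id j" .
  then show "f id j = 0"
    by (simp only: add_cancel_right_right)
qed

lemma cocycle_funpow_Suc:
  "f \<in> cocycles n powers \<Longrightarrow> f (p ^^ Suc k) = (\<lambda>j. f p j + p (f (p ^^ k)) j)"
  using cocycle_comp[OF _ generator_in_powers funpow_in_powers, of f k] by (simp only: funpow.simps(2))

lemma cocycle_eqI:
  assumes f: "f \<in> cocycles n powers" and g: "g \<in> cocycles n powers" and fg: "f p = g p"
  shows "f = g"
proof
  fix a
  show "f a = g a"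
  proof (cases "a \<in> powers")
    case True
    have "f (p ^^ k) = g (p ^^ k)" for k
    proof (induction k)
      case 0
      show ?case using cocycle_id[OF f] cocycle_id[OF g] by (simp add: id_def)
    next
      case (Suc k)
      show ?case unfolding cocycle_funpow_Suc[OF f] cocycle_funpow_Suc[OF g] fg Suc.IH ..
    qed
    with True show ?thesis unfolding powers_iff by auto
  next
    case False
    with f g show ?thesis by (simp add: cocycle_undefined)
  qed
qed

lemma coboundary_in_cocycles:
  assumes m: "m \<in> pic n"
  shows "(\<lambda>a\<in>powers. (\<lambda>j. a m j - m j)) \<in> cocycles n powers"
  unfolding cocycles_def
proof (intro CollectI conjI ballI)
  show "(\<lambda>a\<in>powers. (\<lambda>j. a m j - m j)) \<in> powers \<rightarrow>\<^sub>E pic n"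
    using m powers_pic pic_diff by auto
  fix a b assume a: "a \<in> powers" and b: "b \<in> powers"
  then show "(\<lambda>a\<in>powers. (\<lambda>j. a m j - m j)) (a \<circ> b) =
      (\<lambda>j. (\<lambda>a\<in>powers. (\<lambda>j. a m j - m j)) a j + a ((\<lambda>a\<in>powers. (\<lambda>j. a m j - m j)) b) j)"
    by (simp add: comp_in_powers[OF a b] powers_diff[OF a])
qed

lemma coboundaries_subset_cocycles: "coboundaries n powers \<subseteq> cocycles n powers"
  unfolding coboundaries_def using coboundary_in_cocycles by blast

lemma coboundary_iff:
  assumes f: "f \<in> cocycles n powers"
  shows "f \<in> coboundaries n powers \<longleftrightarrow> (\<exists>z\<in>pic n. f p = (\<lambda>j. p z j - z j))"
proof
  assume "f \<in> coboundaries n powers"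
  then show "\<exists>z\<in>pic n. f p = (\<lambda>j. p z j - z j)"
    unfolding coboundaries_def using generator_in_powers by auto
next
  assume "\<exists>z\<in>pic n. f p = (\<lambda>j. p z j - z j)"
  then obtain z where z: "z \<in> pic n" "f p = (\<lambda>j. p z j - z j)" by blast
  have "f = (\<lambda>a\<in>powers. (\<lambda>j. a z j - z j))"
    by (rule cocycle_eqI[OF f coboundary_in_cocycles[OF z(1)]]) (simp add: z(2) generator_in_powers)
  with z(1) show "f \<in> coboundaries n powers"
    unfolding coboundaries_def by blast
qed

text \<open>An invariant form takes the value \<open>k * L (f p)\<close> at \<open>f (p ^^ k)\<close>, and
  \<open>p ^^ a = p ^^ b\<close> for some \<open>a \<noteq> b\<close>.\<close>

lemma invariant_form_vanishes:
  assumes f: "f \<in> cocycles n powers"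
    and L_add: "\<And>x y. L (\<lambda>j. x j + y j) = L x + L y"
    and L_inv: "\<And>y. y \<in> pic n \<Longrightarrow> L (p y) = (L y :: int)"
  shows "L (f p) = 0"
proof -
  have L0: "L (\<lambda>j. 0) = 0"
    using L_add[of "\<lambda>j. 0" "\<lambda>j. 0"] by simp
  have k: "L (f (p ^^ k)) = int k * L (f p)" for k
  proof (induction k)
    case 0
    show ?case using cocycle_id[OF f] L0 by (simp add: id_def)
  next
    case (Suc k)
    have "L (f (p ^^ Suc k)) = L (f p) + L (f (p ^^ k))"
      unfolding cocycle_funpow_Suc[OF f] L_add L_inv[OF cocycle_pic[OF f funpow_in_powers]] ..
    also have "\<dots> = int (Suc k) * L (f p)"
      using Suc.IH by (simp add: algebra_simps)
    finally show ?case .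
  qed
  have "range (\<lambda>k. p ^^ k) = {p ^^ k | k. True}" by auto
  then have "\<not> inj (\<lambda>k. p ^^ k)"
    using finite_powers by (metis finite_imageD infinite_UNIV_nat)
  then obtain a b where "a \<noteq> b" "p ^^ a = p ^^ b"
    unfolding inj_def by blast
  with k[of a] k[of b] show ?thesis by simp
qed

lemma powers_minus_id_even:
  assumes ev: "\<And>j. even (p z j - z j)" and a: "a \<in> powers"
  shows "even (a z j - z j)"
proof -
  have "even ((p ^^ k) z j - z j)" for k
  proof (induction k arbitrary: j)
    case (Suc k)
    define d where "d = (\<lambda>j. (p ^^ k) z j - z j)"
    have "d = (\<lambda>j. 2 * (d j div 2))"
      unfolding d_def using Suc.IH by (simp add: even_two_times_div_two)
    then have "p d = (\<lambda>j. 2 * p (\<lambda>j. d j div 2) j)"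
      by (metis powers_double[OF generator_in_powers])
    then have "even (p d j)"
      by (metis dvd_triv_left)
    moreover have "(p ^^ Suc k) z j - z j = p d j + (p z j - z j)"
      unfolding d_def powers_diff[OF generator_in_powers] by simp
    ultimately show ?case
      using ev[of j] by simp
  qed simp
  with a show ?thesis
    unfolding powers_iff by blast
qed

lemma half_coboundary_in_cocycles:
  assumes z: "z \<in> pic n" and ev: "\<And>j. even (p z j - z j)"
  shows "(\<lambda>a\<in>powers. (\<lambda>j. (a z j - z j) div 2)) \<in> cocycles n powers"
  unfolding cocycles_def
proof (intro CollectI conjI ballI)
  have twice: "a z j - z j = 2 * ((a z j - z j) div 2)" if "a \<in> powers" for a j
    using powers_minus_id_even[OF ev that] by (simp add: even_two_times_div_two)
  have "(\<lambda>j. (a z j - z j) div 2) \<in> pic n" if "a \<in> powers" for a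
    using powers_pic[OF that z] z unfolding pic_def by simp
  then show "(\<lambda>a\<in>powers. (\<lambda>j. (a z j - z j) div 2)) \<in> powers \<rightarrow>\<^sub>E pic n"
    by auto
  fix a b assume a: "a \<in> powers" and b: "b \<in> powers"
  define h where "h = (\<lambda>j. (b z j - z j) div 2)"
  have "(\<lambda>j. a (b z) j - a z j) = a (\<lambda>j. b z j - z j)"
    by (rule powers_diff[OF a, symmetric])
  also have "(\<lambda>j. b z j - z j) = (\<lambda>j. 2 * h j)"
    unfolding h_def using twice[OF b] by simp
  also have "a (\<lambda>j. 2 * h j) = (\<lambda>j. 2 * a h j)"
    by (rule powers_double[OF a])
  finally have ab: "a (b z) j - a z j = 2 * a h j" for j
    by (rule fun_cong)
  have "((a \<circ> b) z j - z j) div 2 = (a z j - z j) div 2 + a h j" for j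
  proof -
    obtain q where q: "a z j - z j = 2 * q"
      using twice[OF a, of j] by blast
    have "(a \<circ> b) z j - z j = 2 * (q + a h j)"
      unfolding comp_apply distrib_left using ab[of j] q by linarith
    then show ?thesis
      using q by simp
  qed
  then show "(\<lambda>a\<in>powers. (\<lambda>j. (a z j - z j) div 2)) (a \<circ> b) =
      (\<lambda>j. (\<lambda>a\<in>powers. (\<lambda>j. (a z j - z j) div 2)) a j + a ((\<lambda>a\<in>powers. (\<lambda>j. (a z j - z j) div 2)) b) j)"
    using a b comp_in_powers[OF a b] unfolding h_def by simp
qed

lemma cocycles_add_closed:
  assumes f: "f \<in> cocycles n powers" and g: "g \<in> cocycles n powers"
  shows "(\<lambda>a\<in>powers. (\<lambda>j. f a j + g a j)) \<in> cocycles n powers"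
  unfolding cocycles_def
proof (intro CollectI conjI ballI)
  show "(\<lambda>a\<in>powers. (\<lambda>j. f a j + g a j)) \<in> powers \<rightarrow>\<^sub>E pic n"
    using cocycle_pic[OF f] cocycle_pic[OF g] pic_add by auto
  fix a b assume a: "a \<in> powers" and b: "b \<in> powers"
  show "(\<lambda>a\<in>powers. (\<lambda>j. f a j + g a j)) (a \<circ> b) =
     (\<lambda>j. (\<lambda>a\<in>powers. (\<lambda>j. f a j + g a j)) a j + a ((\<lambda>a\<in>powers. (\<lambda>j. f a j + g a j)) b) j)"
    using a b comp_in_powers[OF a b] cocycle_comp[OF f a b] cocycle_comp[OF g a b]
    by (simp add: powers_additive[OF a] algebra_simps)
qed

lemma cocycles_uminus_closed:
  assumes f: "f \<in> cocycles n powers"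
  shows "(\<lambda>a\<in>powers. (\<lambda>j. - f a j)) \<in> cocycles n powers"
  unfolding cocycles_def
proof (intro CollectI conjI ballI)
  show "(\<lambda>a\<in>powers. (\<lambda>j. - f a j)) \<in> powers \<rightarrow>\<^sub>E pic n"
    using cocycle_pic[OF f] pic_smult[of _ n "-1"] by auto
  fix a b assume a: "a \<in> powers" and b: "b \<in> powers"
  show "(\<lambda>a\<in>powers. (\<lambda>j. - f a j)) (a \<circ> b) =
     (\<lambda>j. (\<lambda>a\<in>powers. (\<lambda>j. - f a j)) a j + a ((\<lambda>a\<in>powers. (\<lambda>j. - f a j)) b) j)"
    using a b comp_in_powers[OF a b] cocycle_comp[OF f a b] by (simp add: powers_minus[OF a])
qed

lemma zero_in_cocycles: "(\<lambda>a\<in>powers. (\<lambda>j. 0::int)) \<in> cocycles n powers"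
proof -
  have "(\<lambda>a\<in>powers. (\<lambda>j. a (\<lambda>j. 0) j - 0)) = (\<lambda>a\<in>powers. (\<lambda>j. 0::int))"
    by (rule restrict_ext) (simp add: powers_zero)
  then show ?thesis
    using coboundary_in_cocycles[OF pic_zero] by simp
qed

lemma comm_group_cocycle_group: "comm_group (cocycle_group n powers)"
  unfolding cocycle_group_def
proof (rule comm_groupI, simp_all only: partial_object.simps monoid.simps)
  fix x y z assume "x \<in> cocycles n powers" "y \<in> cocycles n powers" "z \<in> cocycles n powers"
  show "(\<lambda>a\<in>powers. (\<lambda>j. (\<lambda>a\<in>powers. (\<lambda>j. x a j + y a j)) a j + z a j)) =
      (\<lambda>a\<in>powers. (\<lambda>j. x a j + (\<lambda>a\<in>powers. (\<lambda>j. y a j + z a j)) a j))"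
    by (rule restrict_ext) (simp add: algebra_simps)
next
  fix x assume x: "x \<in> cocycles n powers"
  have "(\<lambda>a\<in>powers. x a) = x"
    using cocycle_undefined[OF x] by (auto simp: fun_eq_iff)
  then show "(\<lambda>a\<in>powers. (\<lambda>j. (\<lambda>a\<in>powers. (\<lambda>j. 0)) a j + x a j)) = x"
    by (simp cong: restrict_cong)
  show "\<exists>y\<in>cocycles n powers. (\<lambda>a\<in>powers. (\<lambda>j. y a j + x a j)) = (\<lambda>a\<in>powers. (\<lambda>j. 0))"
  proof
    show "(\<lambda>a\<in>powers. (\<lambda>j. (\<lambda>a\<in>powers. (\<lambda>j. - x a j)) a j + x a j)) = (\<lambda>a\<in>powers. (\<lambda>j. 0))"
      by (rule restrict_ext) simp
  qed (rule cocycles_uminus_closed[OF x])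
qed (auto intro: cocycles_add_closed zero_in_cocycles restrict_ext simp: add.commute)

end

section \<open>Cycles of a permutation\<close>

locale perm_cycles =
  fixes \<tau> :: "'a::linorder \<Rightarrow> 'a" and A :: "'a set"
  assumes permutes: "\<tau> permutes A" and finite_A: "finite A"
begin

lemma permutation: "permutation \<tau>"
  using permutes finite_A permutes_imp_permutation by blast

lemma orbit_eq_funpow: "orbit \<tau> u = {(\<tau> ^^ k) u | k. True}"
  by (rule orbit_altdef_permutation[OF permutation])

lemma self_in_orbit: "u \<in> orbit \<tau> u"
  by (rule permutation_self_in_orbit[OF permutation])

lemma orbit_finite: "finite (orbit \<tau> u)"
  by (rule finite_orbit[OF self_in_orbit])

lemma orbit_eq: "v \<in> orbit \<tau> u \<Longrightarrow> orbit \<tau> v = orbit \<tau> u"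
  using cyclic_on_orbit'[OF permutation] by (metis orbit_cyclic_eq3)

lemma orbit_step_eq: "orbit \<tau> (\<tau> u) = orbit \<tau> u"
  by (rule permutation_orbit_step[OF permutation])

lemma step_in_orbit_iff: "\<tau> v \<in> orbit \<tau> u \<longleftrightarrow> v \<in> orbit \<tau> u"
proof
  assume "\<tau> v \<in> orbit \<tau> u"
  then have "orbit \<tau> v = orbit \<tau> u"
    using orbit_eq orbit_step_eq by metis
  then show "v \<in> orbit \<tau> u"
    using self_in_orbit by blast
qed (rule orbit.step)

lemma orbit_subset: "u \<in> A \<Longrightarrow> orbit \<tau> u \<subseteq> A"
  by (rule permutes_orbit_subset[OF permutes])

lemma image_orbit: "\<tau> ` orbit \<tau> u = orbit \<tau> u"
proof
  show "\<tau> ` orbit \<tau> u \<subseteq> orbit \<tau> u"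
    using step_in_orbit_iff by blast
  show "orbit \<tau> u \<subseteq> \<tau> ` orbit \<tau> u"
  proof
    fix v assume v: "v \<in> orbit \<tau> u"
    obtain w where w: "v = \<tau> w"
      using permutes_surj[OF permutes] by (metis surj_f_inv_f)
    with v have "w \<in> orbit \<tau> u"
      using step_in_orbit_iff by simp
    with w show "v \<in> \<tau> ` orbit \<tau> u" by blast
  qed
qed

lemma sum_orbit_step: "(\<Sum>v\<in>orbit \<tau> u. g (\<tau> v)) = (\<Sum>v\<in>orbit \<tau> u. g v)"
  using sum.reindex[of \<tau> "orbit \<tau> u" g] image_orbit permutes_inj[OF permutes]
  by (simp add: inj_on_subset comp_def)

lemma prod_orbit_step: "(\<Prod>v\<in>orbit \<tau> u. g (\<tau> v)) = (\<Prod>v\<in>orbit \<tau> u. g v)"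
  using prod.reindex[of \<tau> "orbit \<tau> u" g] image_orbit permutes_inj[OF permutes]
  by (simp add: inj_on_subset comp_def)

definition rep :: "'a \<Rightarrow> 'a" where
  "rep u = Min (orbit \<tau> u)"

definition reps :: "'a set" where
  "reps = {r \<in> A. rep r = r}"

definition height :: "'a \<Rightarrow> nat" where
  "height u = funpow_dist \<tau> u (rep u)"

lemma rep_in_orbit: "rep u \<in> orbit \<tau> u"
  unfolding rep_def by (rule Min_in[OF orbit_finite]) (use self_in_orbit in blast)

lemma rep_eq: "v \<in> orbit \<tau> u \<Longrightarrow> rep v = rep u"
  unfolding rep_def by (simp add: orbit_eq)

lemma rep_step: "rep (\<tau> u) = rep u"
  unfolding rep_def orbit_step_eq ..

lemma rep_in_reps: "u \<in> A \<Longrightarrow> rep u \<in> reps"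
  unfolding reps_def using rep_in_orbit[of u] orbit_subset[of u] rep_eq[OF rep_in_orbit] by auto

lemma reps_subset: "reps \<subseteq> A"
  unfolding reps_def by blast

lemma finite_reps: "finite reps"
  using reps_subset finite_A finite_subset by blast

lemma rep_reps: "r \<in> reps \<Longrightarrow> rep r = r"
  unfolding reps_def by blast

lemma reps_eqI: "r \<in> reps \<Longrightarrow> r' \<in> reps \<Longrightarrow> r' \<in> orbit \<tau> r \<Longrightarrow> r' = r"
  using rep_eq rep_reps by metis

lemma orbits_disjoint:
  assumes "r \<in> reps" "r' \<in> reps" "r \<noteq> r'"
  shows "orbit \<tau> r \<inter> orbit \<tau> r' = {}"
proof (rule ccontr)
  assume "orbit \<tau> r \<inter> orbit \<tau> r' \<noteq> {}"
  then obtain u where "u \<in> orbit \<tau> r" "u \<in> orbit \<tau> r'" by blast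
  then have "rep r = rep r'"
    using rep_eq by metis
  with assms show False
    using rep_reps by simp
qed

lemma in_orbit_rep: "u \<in> orbit \<tau> (rep u)"
  using orbit_eq[OF rep_in_orbit] self_in_orbit by simp

lemma Union_orbits: "(\<Union>r\<in>reps. orbit \<tau> r) = A"
proof
  show "(\<Union>r\<in>reps. orbit \<tau> r) \<subseteq> A"
    using orbit_subset reps_subset by blast
  show "A \<subseteq> (\<Union>r\<in>reps. orbit \<tau> r)"
    using rep_in_reps in_orbit_rep by blast
qed

lemma sum_over_orbits: "(\<Sum>u\<in>A. g u) = (\<Sum>r\<in>reps. \<Sum>u\<in>orbit \<tau> r. g u)"
proof -
  have "(\<Sum>u\<in>(\<Union>r\<in>reps. orbit \<tau> r). g u) = (\<Sum>r\<in>reps. \<Sum>u\<in>orbit \<tau> r. g u)"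
    by (rule sum.UNION_disjoint[OF finite_reps]) (auto simp: orbit_finite orbits_disjoint)
  then show ?thesis
    by (simp only: Union_orbits)
qed

lemma card_over_orbits:
  assumes "B \<subseteq> A"
  shows "card B = (\<Sum>r\<in>reps. card (B \<inter> orbit \<tau> r))"
proof -
  have "card (\<Union>r\<in>reps. B \<inter> orbit \<tau> r) = (\<Sum>r\<in>reps. card (B \<inter> orbit \<tau> r))"
  proof (rule card_UN_disjoint[OF finite_reps])
    show "\<forall>r\<in>reps. finite (B \<inter> orbit \<tau> r)"
      by (simp add: orbit_finite)
    show "\<forall>r\<in>reps. \<forall>r'\<in>reps. r \<noteq> r' \<longrightarrow> B \<inter> orbit \<tau> r \<inter> (B \<inter> orbit \<tau> r') = {}"
      using orbits_disjoint by blast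
  qed
  moreover have "(\<Union>r\<in>reps. B \<inter> orbit \<tau> r) = B \<inter> (\<Union>r\<in>reps. orbit \<tau> r)"
    by blast
  ultimately show ?thesis
    using assms by (simp add: Union_orbits Int_absorb2)
qed

lemma orbits_eq_image_reps: "orbit \<tau> ` A = orbit \<tau> ` reps"
proof
  show "orbit \<tau> ` A \<subseteq> orbit \<tau> ` reps"
  proof
    fix c assume "c \<in> orbit \<tau> ` A"
    then obtain u where u: "u \<in> A" "c = orbit \<tau> u" by blast
    then have "c = orbit \<tau> (rep u)"
      using orbit_eq[OF rep_in_orbit] by simp
    with u show "c \<in> orbit \<tau> ` reps"
      using rep_in_reps by blast
  qed
  show "orbit \<tau> ` reps \<subseteq> orbit \<tau> ` A"
    using reps_subset by blast
qed

lemma inj_on_orbit_reps: "inj_on (orbit \<tau>) reps"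
proof
  fix r r' assume "r \<in> reps" "r' \<in> reps" "orbit \<tau> r = orbit \<tau> r'"
  then have "r' \<in> orbit \<tau> r"
    using self_in_orbit[of r'] by simp
  with \<open>r \<in> reps\<close> \<open>r' \<in> reps\<close> show "r = r'"
    using reps_eqI by metis
qed

lemma height_rep: "r \<in> reps \<Longrightarrow> height r = 0"
  unfolding height_def by (simp add: rep_reps funpow_dist_0)

lemma height_step:
  assumes "u \<in> A" "u \<notin> reps"
  shows "height u = Suc (height (\<tau> u))"
proof -
  have "u \<noteq> rep u"
    using assms unfolding reps_def by auto
  then show ?thesis
    unfolding height_def rep_step by (rule funpow_dist_step[OF _ rep_in_orbit])
qed

lemma step_neq: "u \<in> A \<Longrightarrow> u \<notin> reps \<Longrightarrow> \<tau> u \<noteq> u"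
  using height_step[of u] by auto

end

section \<open>The action of \<open>g\<close> on \<open>Pic(X)\<close>\<close>

locale wd_element =
  fixes n :: nat and \<tau> :: "nat \<Rightarrow> nat" and S :: "nat set"
  assumes in_WD: "in_WD n \<tau> S"
begin

abbreviation P where "P \<equiv> Phi n \<tau> S"

text \<open>\<open>eps\<close> is the sign \<open>s\<close> of the statement, and \<open>flip_basis u = \<Phi>(g) l\<^sub>\<tau>\<^sub>u\<close>.\<close>

definition eps :: "nat \<Rightarrow> int" where
  "eps u = (if u \<in> S then -1 else 1)"

definition flip_basis :: "nat \<Rightarrow> int \<Rightarrow> int" where
  "flip_basis u j = (if u \<in> S then basis_l 0 j - basis_l (int u) j else basis_l (int u) j)"

lemma tau_permutes: "\<tau> permutes {1..n}"
  and S_subset: "S \<subseteq> {1..n}"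
  and even_card_S: "even (card S)"
  using in_WD by (auto simp: in_WD_def)

lemma finite_S: "finite S"
  using S_subset finite_subset by blast

lemma tau_in: "u \<in> {1..n} \<Longrightarrow> \<tau> u \<in> {1..n}"
  using permutes_in_image[OF tau_permutes] by blast

lemma inj_tau: "inj \<tau>"
  using tau_permutes permutes_inj by blast

lemma sum_reindex_tau: "(\<Sum>v\<in>{1..n}. F v) = (\<Sum>u\<in>{1..n}. F (\<tau> u))"
  using sum.permute[OF tau_permutes, of F] by (simp add: comp_def)

lemma Phi_basis_tau:
  assumes u: "u \<in> {1..n}"
  shows "Phi_basis n \<tau> S (int (\<tau> u)) = flip_basis u"
proof -
  have "inv_into {1..n} \<tau> (\<tau> u) = u"
    using u inj_tau by (meson inj_on_subset inv_into_f_f subset_UNIV)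
  then show ?thesis
    using tau_in[OF u] unfolding Phi_basis_def flip_basis_def by (auto simp: Let_def fun_eq_iff)
qed

lemma Phi_expand: "P x j = x (-1) * Phi_basis n \<tau> S (-1) j + x 0 * basis_l 0 j
    + (\<Sum>u\<in>{1..n}. x (int (\<tau> u)) * flip_basis u j)"
proof -
  have "(\<Sum>i\<in>int ` {1..n}. x i * Phi_basis n \<tau> S i j) = (\<Sum>v\<in>{1..n}. x (int v) * Phi_basis n \<tau> S (int v) j)"
    by (simp add: sum.reindex)
  also have "\<dots> = (\<Sum>u\<in>{1..n}. x (int (\<tau> u)) * Phi_basis n \<tau> S (int (\<tau> u)) j)"
    by (rule sum_reindex_tau)
  also have "\<dots> = (\<Sum>u\<in>{1..n}. x (int (\<tau> u)) * flip_basis u j)"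
    by (rule sum.cong) (auto simp: Phi_basis_tau)
  finally have sum_pos: "(\<Sum>i\<in>int ` {1..n}. x i * Phi_basis n \<tau> S i j) = \<dots>" .
  have "-1 \<notin> insert 0 (int ` {1..n})" "(0::int) \<notin> int ` {1..n}" "finite (int ` {1..n})"
    by auto
  then have "P x j = x (-1) * Phi_basis n \<tau> S (-1) j + (x 0 * Phi_basis n \<tau> S 0 j +
      (\<Sum>i\<in>int ` {1..n}. x i * Phi_basis n \<tau> S i j))"
    unfolding Phi_def pic_range by simp
  also have "Phi_basis n \<tau> S 0 = basis_l 0"
    unfolding Phi_basis_def by simp
  finally show ?thesis
    unfolding sum_pos by simp
qed

lemma sum_S_indicator: "(\<Sum>s\<in>S. if j = int s then 1 else 0) = (if j \<in> int ` S then 1 else (0::int))"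
proof (cases "j \<in> int ` S")
  case True
  then obtain u where u: "u \<in> S" "j = int u" by blast
  have "(\<Sum>s\<in>S. if j = int s then 1 else 0) = (\<Sum>s\<in>S. if s = u then 1 else (0::int))"
    by (rule sum.cong) (auto simp: u)
  also have "\<dots> = 1" using u finite_S by simp
  finally show ?thesis using True by simp
qed (auto intro!: sum.neutral)

lemma Phi_coord_m1: "P x (-1) = x (-1)"
  by (simp add: Phi_expand Phi_basis_def basis_l_apply flip_basis_def cong: if_cong)

lemma Phi_coord_0: "P x 0 = x (-1) * int (card S div 2) + x 0 + (\<Sum>u\<in>S. x (int (\<tau> u)))"
proof -
  have "(\<Sum>u\<in>{1..n}. x (int (\<tau> u)) * flip_basis u 0) = (\<Sum>u\<in>{1..n}. if u \<in> S then x (int (\<tau> u)) else 0)"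
    by (rule sum.cong) (auto simp: flip_basis_def basis_l_apply)
  also have "\<dots> = (\<Sum>u\<in>S. x (int (\<tau> u)))"
    using S_subset by (simp add: sum.If_cases Int_absorb1)
  finally show ?thesis
    using S_subset by (auto simp: Phi_expand Phi_basis_def sum_S_indicator basis_l_apply)
qed

lemma Phi_coord:
  assumes u0: "u0 \<in> {1..n}"
  shows "P x (int u0) = - x (-1) * of_bool (u0 \<in> S) + eps u0 * x (int (\<tau> u0))"
proof -
  have "(\<Sum>u\<in>{1..n}. x (int (\<tau> u)) * flip_basis u (int u0))
      = (\<Sum>u\<in>{1..n}. if u = u0 then eps u0 * x (int (\<tau> u0)) else 0)"
    by (rule sum.cong) (use u0 in \<open>auto simp: flip_basis_def basis_l_apply eps_def\<close>)
  also have "\<dots> = eps u0 * x (int (\<tau> u0))"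
    using u0 by simp
  finally show ?thesis
    using u0 by (auto simp: Phi_expand Phi_basis_def sum_S_indicator basis_l_apply)
qed

lemma Phi_coord_outside: "j \<notin> {-1..int n} \<Longrightarrow> P x j = 0"
  using S_subset by (auto simp: Phi_expand Phi_basis_def flip_basis_def basis_l_apply sum_S_indicator
      cong: if_cong)

lemma Phi_sum: "finite I \<Longrightarrow> P (\<lambda>j. \<Sum>i\<in>I. f i j) = (\<lambda>j. \<Sum>i\<in>I. P (f i) j)"
  unfolding Phi_def sum_distrib_right by (rule ext, rule sum.swap)

lemma Phi_add: "P (\<lambda>j. x j + y j) = (\<lambda>j. P x j + P y j)"
  unfolding Phi_def by (auto simp: fun_eq_iff distrib_right sum.distrib)

lemma Phi_smult: "P (\<lambda>j. c * x j) = (\<lambda>j. c * P x j)"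
  unfolding Phi_def by (auto simp: fun_eq_iff sum_distrib_left mult.assoc)

lemma Phi_pic: "P x \<in> pic n"
  unfolding pic_def using Phi_coord_outside by auto

lemma Phi_basis_l:
  assumes i: "i \<in> {-1..int n}"
  shows "P (basis_l i) = Phi_basis n \<tau> S i"
proof
  fix j
  have "P (basis_l i) j = (\<Sum>i'\<in>{-1..int n}. if i' = i then Phi_basis n \<tau> S i j else 0)"
    unfolding Phi_def by (rule sum.cong) (auto simp: basis_l_apply)
  also have "\<dots> = Phi_basis n \<tau> S i j"
    using i by simp
  finally show "P (basis_l i) j = Phi_basis n \<tau> S i j" .
qed

lemma Phi_basis_l_0: "P (basis_l 0) = basis_l 0"
  by (simp add: Phi_basis_l Phi_basis_def)

lemma Phi_basis_l_tau: "u \<in> {1..n} \<Longrightarrow> P (basis_l (int (\<tau> u))) = flip_basis u"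
  using tau_in[of u] by (simp add: Phi_basis_l Phi_basis_tau)

lemma funpow_Phi_linear_combination:
  "(P ^^ k) (\<lambda>j. \<Sum>i\<in>{-1..int n}. x i * basis_l i j) = (\<lambda>j. \<Sum>i\<in>{-1..int n}. x i * (P ^^ k) (basis_l i) j)"
proof (induction k)
  case (Suc k)
  show ?case
    by (simp add: Suc.IH Phi_sum Phi_smult)
qed simp

text \<open>\<open>l\<^sub>u\<close> and \<open>l\<^sub>0 - l\<^sub>u\<close> are the classes of the two components of the \<open>u\<close>-th
  degenerate fibre; \<open>P\<close> permutes them, fixes \<open>l\<^sub>0\<close> and fixes \<open>2 l\<^sub>-\<^sub>1 - \<Sum> l\<^sub>u\<close>,
  so it has finite order.\<close>

definition fibre_components :: "(int \<Rightarrow> int) set" where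
  "fibre_components = (\<lambda>u. basis_l (int u)) ` {1..n} \<union> (\<lambda>u. (\<lambda>j. basis_l 0 j - basis_l (int u) j)) ` {1..n}"

lemma flip_basis_eq:
  "flip_basis u = (if u \<in> S then (\<lambda>j. basis_l 0 j - basis_l (int u) j) else basis_l (int u))"
  by (rule ext) (simp add: flip_basis_def)

lemma Phi_fibre_components: "y \<in> fibre_components \<Longrightarrow> P y \<in> fibre_components"
proof -
  have "P (basis_l (int v)) \<in> fibre_components \<and> P (\<lambda>j. basis_l 0 j - basis_l (int v) j) \<in> fibre_components"
    if v: "v \<in> {1..n}" for v
  proof -
    obtain u where u: "u \<in> {1..n}" "v = \<tau> u"
      using v permutes_image[OF tau_permutes] by blast
    have "P (\<lambda>j. basis_l 0 j - basis_l (int v) j) = (\<lambda>j. basis_l 0 j - flip_basis u j)"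
      using Phi_smult[of "-1" "basis_l (int v)"] Phi_add[of "basis_l 0" "\<lambda>j. - basis_l (int v) j"] u
      by (simp add: Phi_basis_l_0 Phi_basis_l_tau)
    moreover have "(\<lambda>j. basis_l 0 j - flip_basis u j) =
        (if u \<in> S then basis_l (int u) else (\<lambda>j. basis_l 0 j - basis_l (int u) j))"
      unfolding flip_basis_eq by auto
    ultimately show ?thesis
      using u unfolding fibre_components_def by (simp add: Phi_basis_l_tau flip_basis_eq)
  qed
  then show "y \<in> fibre_components \<Longrightarrow> P y \<in> fibre_components"
    unfolding fibre_components_def by blast
qed

definition invariant_class :: "int \<Rightarrow> int" where
  "invariant_class = (\<lambda>j. 2 * basis_l (-1) j - (\<Sum>v\<in>{1..n}. basis_l (int v) j))"

lemma invariant_class_apply: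
  "invariant_class j = (if j = -1 then 2 else if j \<in> int ` {1..n} then -1 else 0)"
proof (cases "j \<in> int ` {1..n}")
  case True
  then obtain u where u: "u \<in> {1..n}" "j = int u" by blast
  have "(\<Sum>v\<in>{1..n}. basis_l (int v) j) = (\<Sum>v\<in>{1..n}. if v = u then 1 else 0)"
    by (rule sum.cong) (auto simp: basis_l_apply u)
  then show ?thesis
    using u by (simp add: invariant_class_def basis_l_apply)
qed (auto simp: invariant_class_def basis_l_apply intro!: sum.neutral)

lemma Phi_invariant_class: "P invariant_class = invariant_class"
proof
  fix j
  have pos: "invariant_class (int u) = -1" if "u \<in> {1..n}" for u
    using that by (simp add: invariant_class_apply)
  have m1: "invariant_class (-1) = 2" and zero: "invariant_class 0 = 0"
    by (auto simp: invariant_class_apply)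
  have "(\<Sum>u\<in>S. invariant_class (int (\<tau> u))) = - int (card S)"
    using pos tau_in S_subset by (simp add: subset_iff)
  moreover have "2 * int (card S div 2) = int (card S)"
    using even_card_S by (auto elim!: evenE)
  moreover have "j = -1 \<or> j = 0 \<or> j \<in> int ` {1..n} \<or> j \<notin> {-1..int n}"
    using pic_range by blast
  ultimately show "P invariant_class j = invariant_class j"
  proof (elim disjE)
    assume "j \<in> int ` {1..n}"
    then obtain u where "u \<in> {1..n}" "j = int u" by blast
    then show ?thesis
      using tau_in by (simp add: Phi_coord pos eps_def m1)
  next
    assume "j \<notin> {-1..int n}"
    then show ?thesis
      by (auto simp: Phi_coord_outside invariant_class_apply)
  qed (simp_all add: Phi_coord_m1 Phi_coord_0 m1 zero)
qed

lemma funpow_Phi_basis_l_m1: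
  "(\<lambda>j. 2 * (P ^^ k) (basis_l (-1)) j) = (\<lambda>j. invariant_class j + (\<Sum>v\<in>{1..n}. (P ^^ k) (basis_l (int v)) j))"
proof (induction k)
  case 0
  show ?case
    by (simp add: invariant_class_def)
next
  case (Suc k)
  have "(\<lambda>j. 2 * (P ^^ Suc k) (basis_l (-1)) j) = P (\<lambda>j. 2 * (P ^^ k) (basis_l (-1)) j)"
    by (simp add: Phi_smult)
  also have "\<dots> = (\<lambda>j. invariant_class j + (\<Sum>v\<in>{1..n}. (P ^^ Suc k) (basis_l (int v)) j))"
    unfolding Suc.IH Phi_add Phi_invariant_class by (simp add: Phi_sum)
  finally show ?case .
qed

lemma funpow_Phi_eqI:
  assumes ab: "\<And>v. v \<in> {1..n} \<Longrightarrow> (P ^^ a) (basis_l (int v)) = (P ^^ b) (basis_l (int v))"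
  shows "P ^^ Suc a = P ^^ Suc b"
proof
  fix x
  have l0: "(P ^^ k) (basis_l 0) = basis_l 0" for k
    by (induction k) (simp_all add: Phi_basis_l_0)
  have "(\<lambda>j. 2 * (P ^^ a) (basis_l (-1)) j) = (\<lambda>j. 2 * (P ^^ b) (basis_l (-1)) j)"
    unfolding funpow_Phi_basis_l_m1 using ab by simp
  then have m1: "(P ^^ a) (basis_l (-1)) = (P ^^ b) (basis_l (-1))"
    by (auto simp: fun_eq_iff)
  have "(P ^^ a) (basis_l i) = (P ^^ b) (basis_l i)" if "i \<in> {-1..int n}" for i
    using that ab[of "nat i"] l0 m1 unfolding pic_range by auto
  then have "(P ^^ a) (P x) = (P ^^ b) (P x)"
    by (subst (1 2) pic_expand[OF Phi_pic]) (simp add: funpow_Phi_linear_combination)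
  then show "(P ^^ Suc a) x = (P ^^ Suc b) x"
    by (simp add: funpow_Suc_right del: funpow.simps)
qed

lemma finite_Phi_powers: "finite {P ^^ k | k. True}"
proof -
  define f where "f k = (\<lambda>v\<in>{1..n}. (P ^^ k) (basis_l (int v)))" for k
  define g where "g y = P ^^ Suc (SOME k. f k = y)" for y
  have "(P ^^ k) (basis_l (int v)) \<in> fibre_components" if "v \<in> {1..n}" for k v
  proof (induction k)
    case 0
    show ?case using that unfolding fibre_components_def by simp
  qed (simp add: Phi_fibre_components)
  then have "range f \<subseteq> {1..n} \<rightarrow>\<^sub>E fibre_components"
    unfolding f_def by auto
  moreover have "finite ({1..n} \<rightarrow>\<^sub>E fibre_components)"
    unfolding fibre_components_def by (intro finite_PiE) auto
  ultimately have fin: "finite (range f)"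
    by (rule finite_subset)
  have eq: "P ^^ Suc k = g (f k)" for k
    unfolding g_def
  proof (rule funpow_Phi_eqI)
    fix v assume v: "v \<in> {1..n}"
    have "f (SOME k'. f k' = f k) = f k"
      by (rule someI) (rule refl)
    then have "f k v = f (SOME k'. f k' = f k) v"
      by simp
    with v show "(P ^^ k) (basis_l (int v)) = (P ^^ (SOME k'. f k' = f k)) (basis_l (int v))"
      unfolding f_def by simp
  qed
  have "{P ^^ k | k. True} \<subseteq> insert id (g ` range f)"
  proof
    fix a assume "a \<in> {P ^^ k | k. True}"
    then obtain k where a: "a = P ^^ k" by blast
    show "a \<in> insert id (g ` range f)"
    proof (cases k)
      case 0
      then show ?thesis using a by simp
    next
      case (Suc k')
      then have "a = g (f k')"
        using a eq[of k'] by simp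
      then show ?thesis
        by blast
    qed
  qed
  moreover have "finite (insert id (g ` range f))"
    using fin by simp
  ultimately show ?thesis
    by (rule finite_subset)
qed

sublocale cyclic_pic_action n P
  by unfold_locales (simp_all only: Phi_add Phi_pic finite_Phi_powers)

lemma cyc_eq_powers: "cyc n \<tau> S = powers"
  unfolding cyc_def powers_def ..

end

section \<open>Invariant forms and the image of \<open>\<Phi>(g) - 1\<close>\<close>

context wd_element
begin

sublocale perm_cycles \<tau> "{1..n}"
  by unfold_locales (rule tau_permutes, simp)

lemma orbit_in: "i \<in> {1..n} \<Longrightarrow> u \<in> orbit \<tau> i \<Longrightarrow> u \<in> {1..n}"
  using orbit_subset by blast

lemma reps_in: "r \<in> reps \<Longrightarrow> r \<in> {1..n}"
  using reps_subset by blast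

lemma eps_cases: "eps u = 1 \<or> eps u = -1"
  unfolding eps_def by auto

lemma eps_square: "eps u * eps u = 1"
  unfolding eps_def by auto

lemma eps_eq: "eps u = 1 - 2 * of_bool (u \<in> S)"
  unfolding eps_def by auto

lemma prod_eps: "finite B \<Longrightarrow> (\<Prod>u\<in>B. eps u) = (-1) ^ card (S \<inter> B)"
  unfolding eps_def by (simp add: prod.If_cases Int_commute)

definition path_sign :: "nat \<Rightarrow> int" where
  "path_sign u = (\<Prod>k<height u. eps ((\<tau> ^^ k) u))"

lemma path_sign_rep: "r \<in> reps \<Longrightarrow> path_sign r = 1"
  unfolding path_sign_def by (simp add: height_rep)

lemma path_sign_step:
  assumes "u \<in> {1..n}" "u \<notin> reps"
  shows "path_sign u = eps u * path_sign (\<tau> u)"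
proof -
  have "path_sign u = (\<Prod>k<Suc (height (\<tau> u)). eps ((\<tau> ^^ k) u))"
    unfolding path_sign_def height_step[OF assms] ..
  also have "\<dots> = eps u * (\<Prod>k<height (\<tau> u). eps ((\<tau> ^^ Suc k) u))"
    by (subst prod.lessThan_Suc_shift) simp
  also have "\<dots> = eps u * path_sign (\<tau> u)"
    unfolding path_sign_def by (simp add: funpow_swap1)
  finally show ?thesis .
qed

lemma path_sign_cases: "path_sign u = 1 \<or> path_sign u = -1"
  unfolding path_sign_def by (rule prod_plus_minus_one) (auto simp: eps_cases)

lemma path_sign_square: "path_sign u * path_sign u = 1"
  using path_sign_cases[of u] by auto

text \<open>Multiply the recursion \<open>path_sign u = eps u * path_sign (\<tau> u)\<close>, which fails only at
  \<open>u = r\<close>, over the cycle: the path signs cancel since \<open>\<tau>\<close> permutes the cycle.\<close>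

lemma path_sign_monodromy:
  assumes r: "r \<in> reps"
  shows "eps r * path_sign (\<tau> r) = (-1) ^ card (S \<inter> orbit \<tau> r)"
proof -
  define m where "m = eps r * path_sign (\<tau> r)"
  have step: "path_sign u = eps u * path_sign (\<tau> u) * (if u = r then m else 1)" if u: "u \<in> orbit \<tau> r" for u
  proof (cases "u = r")
    case True
    have "m * m = 1"
      unfolding m_def using eps_square[of r] path_sign_square[of "\<tau> r"] by (simp add: algebra_simps)
    then show ?thesis
      using True r path_sign_rep unfolding m_def by simp
  next
    case False
    then have "u \<notin> reps"
      using reps_eqI[OF r _ u] by blast
    then show ?thesis
      using False path_sign_step orbit_in[OF reps_in[OF r] u] by simp
  qed
  define total where "total = (\<Prod>u\<in>orbit \<tau> r. path_sign u)"
  have "total = (\<Prod>u\<in>orbit \<tau> r. eps u) * (\<Prod>u\<in>orbit \<tau> r. path_sign (\<tau> u)) * (\<Prod>u\<in>orbit \<tau> r. if u = r then m else 1)"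
    unfolding total_def prod.distrib[symmetric] by (rule prod.cong) (simp_all add: step)
  also have "(\<Prod>u\<in>orbit \<tau> r. path_sign (\<tau> u)) = total"
    unfolding total_def by (rule prod_orbit_step)
  also have "(\<Prod>u\<in>orbit \<tau> r. if u = r then m else 1) = m"
    using orbit_finite self_in_orbit by simp
  finally have "total = (\<Prod>u\<in>orbit \<tau> r. eps u) * total * m" .
  moreover have "total = 1 \<or> total = -1"
    unfolding total_def by (rule prod_plus_minus_one) (simp_all add: orbit_finite path_sign_cases)
  ultimately have "(\<Prod>u\<in>orbit \<tau> r. eps u) * m = 1"
    by (auto simp: algebra_simps)
  moreover have "m = 1 \<or> m = -1"
    unfolding m_def using eps_cases[of r] path_sign_cases[of "\<tau> r"] by auto
  ultimately show ?thesis
    unfolding m_def using prod_eps[OF orbit_finite] by auto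
qed

definition odd_reps :: "nat set" where
  "odd_reps = {r \<in> reps. odd (card (S \<inter> orbit \<tau> r))}"

lemma odd_reps_subset: "odd_reps \<subseteq> reps"
  unfolding odd_reps_def by blast

lemma finite_odd_reps: "finite odd_reps"
  using odd_reps_subset finite_reps finite_subset by blast

lemma monodromy_odd: "r \<in> odd_reps \<Longrightarrow> eps r * path_sign (\<tau> r) = -1"
  using path_sign_monodromy unfolding odd_reps_def by simp

lemma path_sign_step_even:
  assumes r: "r \<in> reps - odd_reps" and u: "u \<in> orbit \<tau> r"
  shows "path_sign (\<tau> u) = eps u * path_sign u"
proof -
  have "path_sign u = eps u * path_sign (\<tau> u)"
  proof (cases "u = r")
    case True
    then show ?thesis
      using r path_sign_monodromy[of r] path_sign_rep[of r] unfolding odd_reps_def by simp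
  next
    case False
    then have "u \<notin> reps"
      using r reps_eqI[OF _ _ u] by blast
    then show ?thesis
      using r u path_sign_step orbit_in reps_in by blast
  qed
  then show ?thesis
    using eps_square[of u] by (metis mult.assoc mult_1)
qed

lemma Lambda_eq_card_odd_reps: "Lambda n \<tau> S = card odd_reps"
proof -
  have "tau_cycles n \<tau> = orbit \<tau> ` reps"
    unfolding tau_cycles_def orbit_eq_funpow[symmetric] by (rule orbits_eq_image_reps)
  then have "{\<gamma> \<in> tau_cycles n \<tau>. odd (card (S \<inter> \<gamma>))} = orbit \<tau> ` odd_reps"
    unfolding odd_reps_def by auto
  then show ?thesis
    unfolding Lambda_def by (simp add: card_image[OF inj_on_subset[OF inj_on_orbit_reps odd_reps_subset]])
qed

lemma even_card_odd_reps: "even (card odd_reps)"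
proof -
  have "card S = (\<Sum>r\<in>reps. card (S \<inter> orbit \<tau> r))"
    by (rule card_over_orbits[OF S_subset])
  then show ?thesis
    using even_sum_iff[OF finite_reps, of "\<lambda>r. card (S \<inter> orbit \<tau> r)"] even_card_S
    unfolding odd_reps_def by simp
qed

lemma sum_of_bool_S: "(\<Sum>u\<in>{1..n}. of_bool (u \<in> S) * g u) = (\<Sum>u\<in>S. g u :: int)"
proof -
  have "(\<Sum>u\<in>{1..n}. of_bool (u \<in> S) * g u) = (\<Sum>u\<in>{1..n}. if u \<in> S then g u else 0)"
    by (rule sum.cong) auto
  also have "\<dots> = (\<Sum>u\<in>{1..n} \<inter> S. g u)"
    by (rule sum.inter_restrict[symmetric]) simp
  also have "{1..n} \<inter> S = S"
    using S_subset by blast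
  finally show ?thesis .
qed

definition degree_form :: "(int \<Rightarrow> int) \<Rightarrow> int" where
  "degree_form y = 2 * y 0 + (\<Sum>u\<in>{1..n}. y (int u))"

definition cycle_form :: "nat \<Rightarrow> (int \<Rightarrow> int) \<Rightarrow> int" where
  "cycle_form r y = (\<Sum>u\<in>orbit \<tau> r. path_sign u * y (int u))"

definition cycle_sum :: "nat \<Rightarrow> (int \<Rightarrow> int) \<Rightarrow> int" where
  "cycle_sum r y = (\<Sum>u\<in>orbit \<tau> r. y (int u))"

lemma degree_form_add: "degree_form (\<lambda>j. x j + y j) = degree_form x + degree_form y"
  and cycle_form_add: "cycle_form r (\<lambda>j. x j + y j) = cycle_form r x + cycle_form r y"
  and cycle_sum_add: "cycle_sum r (\<lambda>j. x j + y j) = cycle_sum r x + cycle_sum r y"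
  unfolding degree_form_def cycle_form_def cycle_sum_def by (simp_all add: sum.distrib algebra_simps)

lemma degree_form_diff: "degree_form (\<lambda>j. x j - y j) = degree_form x - degree_form y"
  and cycle_form_diff: "cycle_form r (\<lambda>j. x j - y j) = cycle_form r x - cycle_form r y"
  and cycle_sum_diff: "cycle_sum r (\<lambda>j. x j - y j) = cycle_sum r x - cycle_sum r y"
  unfolding degree_form_def cycle_form_def cycle_sum_def by (simp_all add: sum_subtractf algebra_simps)

lemma degree_form_Phi: "degree_form (P y) = degree_form y"
proof -
  have "(\<Sum>u\<in>{1..n}. P y (int u))
      = (\<Sum>u\<in>{1..n}. - y (-1) * of_bool (u \<in> S) + y (int (\<tau> u)) - 2 * (of_bool (u \<in> S) * y (int (\<tau> u))))"
    by (rule sum.cong) (auto simp: Phi_coord eps_eq algebra_simps)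
  also have "\<dots> = - y (-1) * (\<Sum>u\<in>{1..n}. of_bool (u \<in> S)) + (\<Sum>u\<in>{1..n}. y (int (\<tau> u)))
      - 2 * (\<Sum>u\<in>{1..n}. of_bool (u \<in> S) * y (int (\<tau> u)))"
    by (simp only: sum.distrib sum_subtractf sum_distrib_left)
  also have "(\<Sum>u\<in>{1..n}. of_bool (u \<in> S)) = int (card S)"
    using sum_of_bool_S[of "\<lambda>_. 1"] by simp
  also have "(\<Sum>u\<in>{1..n}. y (int (\<tau> u))) = (\<Sum>u\<in>{1..n}. y (int u))"
    by (rule sum_reindex_tau[symmetric])
  also have "(\<Sum>u\<in>{1..n}. of_bool (u \<in> S) * y (int (\<tau> u))) = (\<Sum>u\<in>S. y (int (\<tau> u)))"
    by (rule sum_of_bool_S)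
  finally have "(\<Sum>u\<in>{1..n}. P y (int u))
      = - y (-1) * int (card S) + (\<Sum>u\<in>{1..n}. y (int u)) - 2 * (\<Sum>u\<in>S. y (int (\<tau> u)))" .
  moreover obtain k where "card S = 2 * k"
    using even_card_S by blast
  ultimately show ?thesis
    unfolding degree_form_def Phi_coord_0 by (simp add: algebra_simps)
qed

lemma cycle_form_Phi:
  assumes r: "r \<in> reps - odd_reps"
  shows "cycle_form r (P y) = cycle_form r y"
proof -
  have rn: "r \<in> {1..n}"
    using r reps_in by blast
  have "cycle_form r (P y)
      = (\<Sum>u\<in>orbit \<tau> r. - y (-1) * (path_sign u * of_bool (u \<in> S)) + path_sign (\<tau> u) * y (int (\<tau> u)))"
    unfolding cycle_form_def
    by (rule sum.cong) (auto simp: Phi_coord[OF orbit_in[OF rn]] path_sign_step_even[OF r] algebra_simps)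
  also have "\<dots> = - y (-1) * (\<Sum>u\<in>orbit \<tau> r. path_sign u * of_bool (u \<in> S))
      + (\<Sum>u\<in>orbit \<tau> r. path_sign (\<tau> u) * y (int (\<tau> u)))"
    by (simp only: sum.distrib sum_distrib_left)
  also have "(\<Sum>u\<in>orbit \<tau> r. path_sign (\<tau> u) * y (int (\<tau> u))) = cycle_form r y"
    unfolding cycle_form_def by (rule sum_orbit_step)
  also have "(\<Sum>u\<in>orbit \<tau> r. path_sign u * of_bool (u \<in> S)) = 0"
  proof -
    have "(\<Sum>u\<in>orbit \<tau> r. path_sign u) = (\<Sum>u\<in>orbit \<tau> r. path_sign (\<tau> u))"
      by (rule sum_orbit_step[symmetric])
    also have "\<dots> = (\<Sum>u\<in>orbit \<tau> r. path_sign u - 2 * (path_sign u * of_bool (u \<in> S)))"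
      by (rule sum.cong) (auto simp: path_sign_step_even[OF r] eps_eq algebra_simps)
    finally show ?thesis
      by (simp add: sum_subtractf sum_distrib_left[symmetric])
  qed
  finally show ?thesis by simp
qed

lemma cycle_sum_Phi_minus_id:
  assumes r: "r \<in> reps"
  obtains k where "cycle_sum r (\<lambda>j. P y j - y j) = - y (-1) * int (card (S \<inter> orbit \<tau> r)) + 2 * k"
proof -
  have rn: "r \<in> {1..n}"
    using r reps_in by blast
  have "cycle_sum r (\<lambda>j. P y j - y j)
      = (\<Sum>u\<in>orbit \<tau> r. - y (-1) * of_bool (u \<in> S) + y (int (\<tau> u)) - y (int u)
          - 2 * (of_bool (u \<in> S) * y (int (\<tau> u))))"
    unfolding cycle_sum_def by (rule sum.cong) (auto simp: Phi_coord[OF orbit_in[OF rn]] eps_eq algebra_simps)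
  also have "\<dots> = - y (-1) * (\<Sum>u\<in>orbit \<tau> r. of_bool (u \<in> S)) + (\<Sum>u\<in>orbit \<tau> r. y (int (\<tau> u)))
      - (\<Sum>u\<in>orbit \<tau> r. y (int u)) - 2 * (\<Sum>u\<in>orbit \<tau> r. of_bool (u \<in> S) * y (int (\<tau> u)))"
    by (simp only: sum.distrib sum_subtractf sum_distrib_left)
  also have "(\<Sum>u\<in>orbit \<tau> r. y (int (\<tau> u))) = (\<Sum>u\<in>orbit \<tau> r. y (int u))"
    by (rule sum_orbit_step)
  also have "(\<Sum>u\<in>orbit \<tau> r. of_bool (u \<in> S)) = int (card (S \<inter> orbit \<tau> r))"
    using orbit_finite by (simp add: of_bool_def sum.If_cases Int_commute)
  finally show ?thesis
    by (intro that[of "- (\<Sum>u\<in>orbit \<tau> r. of_bool (u \<in> S) * y (int (\<tau> u)))"]) simp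
qed

lemma odd_cycle_sum_Phi_minus_id:
  assumes r: "r \<in> odd_reps"
  shows "odd (cycle_sum r (\<lambda>j. P y j - y j)) \<longleftrightarrow> odd (y (-1))"
proof -
  obtain k where "cycle_sum r (\<lambda>j. P y j - y j) = - y (-1) * int (card (S \<inter> orbit \<tau> r)) + 2 * k"
    using r odd_reps_subset cycle_sum_Phi_minus_id by blast
  with r show ?thesis
    unfolding odd_reps_def by simp
qed

lemma even_cycle_sum_if_cycle_form_zero: "cycle_form r x = 0 \<Longrightarrow> even (cycle_sum r x)"
proof -
  have "even ((1 - path_sign u) * x (int u))" for u
    using path_sign_cases[of u] by auto
  then have "even (cycle_sum r x - cycle_form r x)"
    unfolding cycle_sum_def cycle_form_def by (simp add: sum_subtractf[symmetric] dvd_sum algebra_simps)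
  then show "cycle_form r x = 0 \<Longrightarrow> ?thesis" by simp
qed

lemma even_card_odd_cycle_sums:
  assumes "degree_form x = 0" and "\<And>r. r \<in> reps - odd_reps \<Longrightarrow> cycle_form r x = 0"
  shows "even (card {r \<in> odd_reps. odd (cycle_sum r x)})"
proof -
  have "(\<Sum>u\<in>{1..n}. x (int u)) = - 2 * x 0"
    using assms(1) unfolding degree_form_def by simp
  then have "even (\<Sum>r\<in>reps. cycle_sum r x)"
    unfolding cycle_sum_def sum_over_orbits[symmetric] by simp
  then have "even (card {r \<in> reps. odd (cycle_sum r x)})"
    using even_sum_iff[OF finite_reps, of "\<lambda>r. cycle_sum r x"] by simp
  moreover have "{r \<in> reps. odd (cycle_sum r x)} = {r \<in> odd_reps. odd (cycle_sum r x)}"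
    using assms(2) even_cycle_sum_if_cycle_form_zero odd_reps_subset by blast
  ultimately show ?thesis by simp
qed

definition height_weight :: "(int \<Rightarrow> int) \<Rightarrow> int" where
  "height_weight y = (\<Sum>v\<in>{1..n}. int (height v) * \<bar>y (int v)\<bar>)"

lemma height_weight_nonneg: "0 \<le> height_weight y"
  unfolding height_weight_def by (intro sum_nonneg) simp

text \<open>Subtracting a multiple of \<open>P l\<^sub>\<tau>\<^sub>u - l\<^sub>\<tau>\<^sub>u\<close> moves the entry of \<open>y\<close> at \<open>u\<close> one
  step along the cycle, towards the representative.\<close>

definition push_entry :: "nat \<Rightarrow> (int \<Rightarrow> int) \<Rightarrow> int \<Rightarrow> int" where
  "push_entry u y = (\<lambda>j. y j - eps u * y (int u) * (P (basis_l (int (\<tau> u))) j - basis_l (int (\<tau> u)) j))"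

lemma push_entry_pic: "u \<in> {1..n} \<Longrightarrow> y \<in> pic n \<Longrightarrow> push_entry u y \<in> pic n"
  unfolding push_entry_def using tau_in by (intro pic_diff pic_smult Phi_pic basis_l_pic) auto

lemma push_entry_m1: "push_entry u y (-1) = y (-1)"
  unfolding push_entry_def by (simp add: Phi_coord_m1)

lemma push_entry_apply:
  assumes u: "u \<in> {1..n}" "u \<notin> reps" and v: "v \<in> {1..n}"
  shows "push_entry u y (int v) =
    (if v = u then 0 else if v = \<tau> u then y (int v) + eps u * y (int u) else y (int v))"
  using step_neq[OF u] tau_in[OF u(1)] u(1) v eps_square[of u]
  unfolding push_entry_def Phi_basis_l_tau[OF u(1)] by (auto simp: flip_basis_def basis_l_apply eps_def)

lemma height_weight_push_entry:
  assumes u: "u \<in> {1..n}" "u \<notin> reps" "y (int u) \<noteq> 0"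
  shows "height_weight (push_entry u y) < height_weight y"
proof -
  define g where "g v = int (height v) * \<bar>y (int v)\<bar>" for v
  define d where "d v = (if v = \<tau> u then int (height (\<tau> u)) * \<bar>y (int u)\<bar> else 0) - (if v = u then g u else 0)" for v
  have "int (height v) * \<bar>push_entry u y (int v)\<bar> \<le> g v + d v" if "v \<in> {1..n}" for v
  proof -
    have "\<bar>y (int (\<tau> u)) + eps u * y (int u)\<bar> \<le> \<bar>y (int (\<tau> u))\<bar> + \<bar>y (int u)\<bar>"
      using abs_triangle_ineq[of "y (int (\<tau> u))" "eps u * y (int u)"] eps_cases[of u] by auto
    then have "int (height (\<tau> u)) * \<bar>y (int (\<tau> u)) + eps u * y (int u)\<bar>
        \<le> int (height (\<tau> u)) * (\<bar>y (int (\<tau> u))\<bar> + \<bar>y (int u)\<bar>)"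
      by (intro mult_left_mono) auto
    then show ?thesis
      using step_neq[OF u(1,2)] unfolding push_entry_apply[OF u(1,2) that] d_def g_def
      by (auto simp: algebra_simps)
  qed
  then have "height_weight (push_entry u y) \<le> (\<Sum>v\<in>{1..n}. g v + d v)"
    unfolding height_weight_def by (rule sum_mono)
  also have "\<dots> = height_weight y + int (height (\<tau> u)) * \<bar>y (int u)\<bar> - g u"
    unfolding height_weight_def d_def g_def sum.distrib sum_subtractf using tau_in u(1)
    by (simp add: sum.delta)
  also have "\<dots> = height_weight y - \<bar>y (int u)\<bar>"
    unfolding g_def height_step[OF u(1,2)] by (simp add: algebra_simps)
  also have "\<dots> < height_weight y"
    using u(3) by simp
  finally show ?thesis .
qed

lemma Phi_minus_id_off_reps:
  "y \<in> pic n \<Longrightarrow> y (-1) = 0 \<Longrightarrow>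
   \<exists>z\<in>pic n. z (-1) = 0 \<and> (\<forall>u\<in>{1..n} - reps. y (int u) = P z (int u) - z (int u))"
proof (induction "nat (height_weight y)" arbitrary: y rule: less_induct)
  case less
  show ?case
  proof (cases "\<forall>u\<in>{1..n} - reps. y (int u) = 0")
    case True
    then show ?thesis
      using pic_zero Phi_smult[of 0] by (intro bexI[of _ "\<lambda>j. 0"]) auto
  next
    case False
    then obtain u where u: "u \<in> {1..n}" "u \<notin> reps" "y (int u) \<noteq> 0" by blast
    define c where "c = eps u * y (int u)"
    define b where "b = basis_l (int (\<tau> u))"
    have "nat (height_weight (push_entry u y)) < nat (height_weight y)"
      using height_weight_push_entry[of u y, OF u] height_weight_nonneg[of "push_entry u y"] by simp
    then obtain z' where z': "z' \<in> pic n" "z' (-1) = 0"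
      "\<forall>v\<in>{1..n} - reps. push_entry u y (int v) = P z' (int v) - z' (int v)"
      using less.hyps push_entry_pic[OF u(1) less.prems(1)] push_entry_m1 less.prems(2) by metis
    define z where "z = (\<lambda>j. z' j + c * b j)"
    have "z \<in> pic n"
      unfolding z_def b_def using tau_in[OF u(1)] by (intro pic_add pic_smult z'(1) basis_l_pic) auto
    moreover have "z (-1) = 0"
      unfolding z_def b_def using z'(2) by (simp add: basis_l_apply)
    moreover have D: "P z j - z j = P z' j - z' j + c * (P b j - b j)" for j
      unfolding z_def Phi_add Phi_smult by (simp add: algebra_simps)
    have "\<forall>v\<in>{1..n} - reps. y (int v) = P z (int v) - z (int v)"
    proof
      fix v assume "v \<in> {1..n} - reps"
      then have "push_entry u y (int v) = P z' (int v) - z' (int v)"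
        using z'(3) by blast
      then show "y (int v) = P z (int v) - z (int v)"
        unfolding D push_entry_def c_def b_def by simp
    qed
    ultimately show ?thesis
      by blast
  qed
qed

definition odd_cycle_vector :: "nat \<Rightarrow> int \<Rightarrow> int" where
  "odd_cycle_vector r = (\<lambda>j. \<Sum>w\<in>orbit \<tau> r. path_sign w * basis_l (int w) j)"

lemma odd_cycle_vector_apply: "odd_cycle_vector r (int u) = (if u \<in> orbit \<tau> r then path_sign u else 0)"
proof -
  have "odd_cycle_vector r (int u) = (\<Sum>w\<in>orbit \<tau> r. if w = u then path_sign u else 0)"
    unfolding odd_cycle_vector_def by (rule sum.cong) (auto simp: basis_l_apply)
  also have "\<dots> = (if u \<in> orbit \<tau> r then path_sign u else 0)"
    using orbit_finite by simp
  finally show ?thesis .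
qed

lemma odd_cycle_vector_pic:
  assumes r: "r \<in> reps"
  shows "odd_cycle_vector r \<in> pic n"
  unfolding pic_def
proof (intro CollectI allI impI)
  fix j assume j: "j \<notin> {-1..int n}"
  have "j \<noteq> int w" if "w \<in> orbit \<tau> r" for w
    using orbit_in[OF reps_in[OF r] that] j by auto
  then show "odd_cycle_vector r j = 0"
    unfolding odd_cycle_vector_def basis_l_apply by (simp add: sum.neutral)
qed

lemma odd_cycle_vector_m1: "odd_cycle_vector r (-1) = 0"
  unfolding odd_cycle_vector_def basis_l_apply by simp

text \<open>On an odd cycle the path signs are consistent except at the representative, where
  the monodromy \<open>-1\<close> produces the entry \<open>-2\<close>.\<close>

lemma Phi_minus_id_odd_cycle_vector:
  assumes r: "r \<in> odd_reps" and u: "u \<in> {1..n}"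
  shows "P (odd_cycle_vector r) (int u) - odd_cycle_vector r (int u) = (if u = r then -2 else 0)"
proof -
  have rR: "r \<in> reps" and rn: "r \<in> {1..n}"
    using r odd_reps_subset reps_in by blast+
  have P1: "P (odd_cycle_vector r) (int u) = eps u * odd_cycle_vector r (int (\<tau> u))"
    using Phi_coord[OF u] odd_cycle_vector_m1 by simp
  show ?thesis
  proof (cases "u \<in> orbit \<tau> r")
    case True
    then have tu: "\<tau> u \<in> orbit \<tau> r"
      using step_in_orbit_iff by blast
    show ?thesis
    proof (cases "u = r")
      case True
      then show ?thesis
        unfolding P1 odd_cycle_vector_apply using tu monodromy_odd[OF r] path_sign_rep[OF rR] self_in_orbit
        by simp
    next
      case False
      then have "u \<notin> reps"
        using reps_eqI[OF rR _ True] by blast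
      then show ?thesis
        unfolding P1 odd_cycle_vector_apply using True tu False path_sign_step[OF u] by simp
    qed
  next
    case False
    then have "\<tau> u \<notin> orbit \<tau> r" "u \<noteq> r"
      using step_in_orbit_iff self_in_orbit by blast+
    then show ?thesis
      unfolding P1 odd_cycle_vector_apply using False by simp
  qed
qed

lemma pic_eqI:
  assumes "x \<in> pic n" "y \<in> pic n" "x (-1) = y (-1)" "degree_form x = degree_form y"
    and pos: "\<And>u. u \<in> {1..n} \<Longrightarrow> x (int u) = y (int u)"
  shows "x = y"
proof
  fix j
  have "(\<Sum>u\<in>{1..n}. x (int u)) = (\<Sum>u\<in>{1..n}. y (int u))"
    using pos by simp
  then have "x 0 = y 0"
    using assms(4) unfolding degree_form_def by simp
  consider "j = -1" | "j = 0" | "j \<in> int ` {1..n}" | "j \<notin> {-1..int n}"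
    using pic_range by blast
  then show "x j = y j"
  proof cases
    case 3
    then obtain u where "u \<in> {1..n}" "j = int u" by blast
    then show ?thesis
      using pos by simp
  next
    case 4
    then show ?thesis
      using assms(1,2) unfolding pic_def by simp
  qed (simp_all add: assms(3) \<open>x 0 = y 0\<close>)
qed

lemma Phi_minus_id_on_odd_reps:
  assumes y: "y \<in> pic n" "y (-1) = 0" "degree_form y = 0"
    and off: "\<And>u. u \<in> {1..n} - odd_reps \<Longrightarrow> y (int u) = 0"
    and ev: "\<And>r. r \<in> odd_reps \<Longrightarrow> even (y (int r))"
  shows "\<exists>z\<in>pic n. y = (\<lambda>j. P z j - z j)"
proof
  define z where "z = (\<lambda>j. \<Sum>r\<in>odd_reps. - (y (int r) div 2) * odd_cycle_vector r j)"
  show "z \<in> pic n"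
    using odd_cycle_vector_pic odd_reps_subset unfolding z_def pic_def by (auto intro!: sum.neutral)
  have Pz: "P z = (\<lambda>j. \<Sum>r\<in>odd_reps. - (y (int r) div 2) * P (odd_cycle_vector r) j)"
    unfolding z_def Phi_sum[OF finite_odd_reps] Phi_smult ..
  have D: "P z j - z j = (\<Sum>r\<in>odd_reps. - (y (int r) div 2) * (P (odd_cycle_vector r) j - odd_cycle_vector r j))" for j
    unfolding Pz by (simp only: z_def right_diff_distrib sum_subtractf)
  have "y (int u) = P z (int u) - z (int u)" if u: "u \<in> {1..n}" for u
  proof -
    have "P z (int u) - z (int u) = (\<Sum>r\<in>odd_reps. if r = u then 2 * (y (int u) div 2) else 0)"
      unfolding D by (rule sum.cong) (simp_all add: Phi_minus_id_odd_cycle_vector[OF _ u])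
    also have "\<dots> = y (int u)"
      using finite_odd_reps off[of u] ev[of u] u by simp
    finally show ?thesis ..
  qed
  then show "y = (\<lambda>j. P z j - z j)"
    using y \<open>z \<in> pic n\<close>
    by (intro pic_eqI) (simp_all add: pic_diff Phi_pic Phi_coord_m1 degree_form_diff degree_form_Phi)
qed

lemma in_image_Phi_minus_id:
  assumes x: "x \<in> pic n" "x (-1) = 0" "degree_form x = 0"
    and even_cycles: "\<And>r. r \<in> reps - odd_reps \<Longrightarrow> cycle_form r x = 0"
    and odd_cycles: "\<And>r. r \<in> odd_reps \<Longrightarrow> even (cycle_sum r x)"
  shows "\<exists>z\<in>pic n. x = (\<lambda>j. P z j - z j)"
proof -
  obtain z1 where z1: "z1 \<in> pic n" "z1 (-1) = 0"
    "\<forall>u\<in>{1..n} - reps. x (int u) = P z1 (int u) - z1 (int u)"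
    using Phi_minus_id_off_reps[OF x(1,2)] by blast
  define y where "y = (\<lambda>j. x j - (P z1 j - z1 j))"
  have y_pic: "y \<in> pic n"
    unfolding y_def by (intro pic_diff x(1) Phi_pic z1(1))
  have y_m1: "y (-1) = 0"
    unfolding y_def using x(2) by (simp add: Phi_coord_m1)
  have y_degree: "degree_form y = 0"
    unfolding y_def degree_form_diff degree_form_Phi using x(3) by simp
  have y_off: "y (int u) = 0" if "u \<in> {1..n} - reps" for u
    using z1(3) that unfolding y_def by simp
  have sum_rep: "(\<Sum>u\<in>orbit \<tau> r. g u) = g r"
    if r: "r \<in> reps" and g: "\<And>u. y (int u) = 0 \<Longrightarrow> g u = (0::int)" for r g
  proof -
    have "(\<Sum>u\<in>orbit \<tau> r. g u) = (\<Sum>u\<in>orbit \<tau> r. if u = r then g r else 0)"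
    proof (rule sum.cong)
      fix u assume u: "u \<in> orbit \<tau> r"
      show "g u = (if u = r then g r else 0)"
      proof (cases "u = r")
        case False
        then have "u \<in> {1..n} - reps"
          using u r reps_eqI orbit_in[OF reps_in[OF r] u] by blast
        then show ?thesis
          using False g y_off by simp
      qed simp
    qed simp
    then show ?thesis
      using orbit_finite self_in_orbit by simp
  qed
  have "y (int r) = 0" if r: "r \<in> reps - odd_reps" for r
  proof -
    have "cycle_form r y = 0"
      unfolding y_def cycle_form_diff cycle_form_Phi[OF r] using even_cycles[OF r] by simp
    moreover have "cycle_form r y = path_sign r * y (int r)"
      unfolding cycle_form_def using r by (intro sum_rep) simp_all
    ultimately show ?thesis
      using r path_sign_rep by simp
  qed
  then have y_zero: "y (int u) = 0" if "u \<in> {1..n} - odd_reps" for u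
    using that y_off by blast
  have y_even: "even (y (int r))" if r: "r \<in> odd_reps" for r
  proof -
    have rR: "r \<in> reps"
      using r odd_reps_subset by blast
    have "cycle_sum r y = cycle_sum r x - cycle_sum r (\<lambda>j. P z1 j - z1 j)"
      unfolding y_def by (rule cycle_sum_diff)
    moreover have "even (cycle_sum r (\<lambda>j. P z1 j - z1 j))"
      using odd_cycle_sum_Phi_minus_id[OF r] z1(2) by simp
    moreover have "cycle_sum r y = y (int r)"
      unfolding cycle_sum_def using rR by (intro sum_rep) simp_all
    ultimately show ?thesis
      using odd_cycles[OF r] by simp
  qed
  obtain z2 where z2: "z2 \<in> pic n" "y = (\<lambda>j. P z2 j - z2 j)"
    using Phi_minus_id_on_odd_reps[OF y_pic y_m1 y_degree y_zero y_even] by blast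
  have "x = (\<lambda>j. P (\<lambda>j. z1 j + z2 j) j - (z1 j + z2 j))"
  proof
    fix j
    have "y j = P z2 j - z2 j"
      using z2(2) by simp
    then show "x j = P (\<lambda>j. z1 j + z2 j) j - (z1 j + z2 j)"
      unfolding Phi_add y_def by simp
  qed
  moreover have "(\<lambda>j. z1 j + z2 j) \<in> pic n"
    by (intro pic_add z1(1) z2(1))
  ultimately show ?thesis
    by blast
qed

end

section \<open>Computation of \<open>H\<^sup>1\<close>\<close>

context wd_element
begin

lemma cocycle_generator_constraints:
  assumes f: "f \<in> cocycles n powers"
  shows "f P \<in> pic n" "f P (-1) = 0" "degree_form (f P) = 0"
    "\<And>r. r \<in> reps - odd_reps \<Longrightarrow> cycle_form r (f P) = 0"
proof -
  show "f P \<in> pic n"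
    by (rule cocycle_pic[OF f generator_in_powers])
  show "f P (-1) = 0"
    by (rule invariant_form_vanishes[OF f, of "\<lambda>y. y (-1)"]) (simp_all add: Phi_coord_m1)
  show "degree_form (f P) = 0"
    by (rule invariant_form_vanishes[OF f, of degree_form]) (simp_all add: degree_form_add degree_form_Phi)
  show "cycle_form r (f P) = 0" if "r \<in> reps - odd_reps" for r
    by (rule invariant_form_vanishes[OF f, of "cycle_form r"]) (simp_all add: cycle_form_add cycle_form_Phi[OF that])
qed

text \<open>Adding \<open>P l\<^sub>-\<^sub>1 - l\<^sub>-\<^sub>1\<close> flips the parity of every odd cycle sum at once.\<close>

lemma in_image_Phi_minus_id_iff:
  assumes x: "x \<in> pic n" "x (-1) = 0" "degree_form x = 0"
    and even_cycles: "\<And>r. r \<in> reps - odd_reps \<Longrightarrow> cycle_form r x = 0"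
  shows "(\<exists>z\<in>pic n. x = (\<lambda>j. P z j - z j)) \<longleftrightarrow>
    (\<forall>r\<in>odd_reps. \<forall>r'\<in>odd_reps. odd (cycle_sum r x) \<longleftrightarrow> odd (cycle_sum r' x))"
proof
  assume "\<exists>z\<in>pic n. x = (\<lambda>j. P z j - z j)"
  then show "\<forall>r\<in>odd_reps. \<forall>r'\<in>odd_reps. odd (cycle_sum r x) \<longleftrightarrow> odd (cycle_sum r' x)"
    using odd_cycle_sum_Phi_minus_id by blast
next
  assume agree: "\<forall>r\<in>odd_reps. \<forall>r'\<in>odd_reps. odd (cycle_sum r x) \<longleftrightarrow> odd (cycle_sum r' x)"
  show "\<exists>z\<in>pic n. x = (\<lambda>j. P z j - z j)"
  proof (cases "\<forall>r\<in>odd_reps. even (cycle_sum r x)")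
    case True
    then show ?thesis
      using in_image_Phi_minus_id[OF x even_cycles] by blast
  next
    case False
    then have all_odd: "odd (cycle_sum r x)" if "r \<in> odd_reps" for r
      using agree that by blast
    define l where "l = basis_l (-1)"
    have l: "l \<in> pic n" "l (-1) = 1"
      unfolding l_def by (simp_all add: basis_l_pic basis_l_apply)
    define x' where "x' = (\<lambda>j. x j - (P l j - l j))"
    have "x' \<in> pic n"
      unfolding x'_def by (intro pic_diff x(1) Phi_pic l(1))
    moreover have "x' (-1) = 0"
      unfolding x'_def using x(2) by (simp add: Phi_coord_m1)
    moreover have "degree_form x' = 0"
      unfolding x'_def degree_form_diff degree_form_Phi using x(3) by simp
    moreover have "cycle_form r x' = 0" if "r \<in> reps - odd_reps" for r
      unfolding x'_def cycle_form_diff cycle_form_Phi[OF that] using even_cycles[OF that] by simp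
    moreover have "even (cycle_sum r x')" if "r \<in> odd_reps" for r
      using all_odd[OF that] odd_cycle_sum_Phi_minus_id[OF that, of l] l(2)
      unfolding x'_def cycle_sum_diff by simp
    ultimately obtain z where z: "z \<in> pic n" "x' = (\<lambda>j. P z j - z j)"
      using in_image_Phi_minus_id by blast
    have "x = (\<lambda>j. P (\<lambda>j. z j + l j) j - (z j + l j))"
    proof
      fix j
      have "x' j = P z j - z j"
        using z(2) by simp
      then show "x j = P (\<lambda>j. z j + l j) j - (z j + l j)"
        unfolding Phi_add x'_def by simp
    qed
    moreover have "(\<lambda>j. z j + l j) \<in> pic n"
      by (intro pic_add z(1) l(1))
    ultimately show ?thesis
      by blast
  qed
qed

lemma coboundary_iff_odd_cycle_parities_agree:
  assumes f: "f \<in> cocycles n powers"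
  shows "f \<in> coboundaries n powers \<longleftrightarrow>
    (\<forall>r\<in>odd_reps. \<forall>r'\<in>odd_reps. odd (cycle_sum r (f P)) \<longleftrightarrow> odd (cycle_sum r' (f P)))"
  unfolding coboundary_iff[OF f]
  by (rule in_image_Phi_minus_id_iff[OF cocycle_generator_constraints[OF f]])

definition indicator_vector :: "nat set \<Rightarrow> int \<Rightarrow> int" where
  "indicator_vector A j = (if j \<in> int ` A then 1 else 0)"

lemma Phi_minus_id_indicator_vector:
  assumes A: "A \<subseteq> {1..n}" "\<And>u. \<tau> u \<in> A \<longleftrightarrow> u \<in> A"
  shows "indicator_vector A \<in> pic n"
    and "P (indicator_vector A) (-1) - indicator_vector A (-1) = 0"
    and "P (indicator_vector A) 0 - indicator_vector A 0 = int (card (S \<inter> A))"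
    and "\<And>u. u \<in> {1..n} \<Longrightarrow>
      P (indicator_vector A) (int u) - indicator_vector A (int u) = 2 * - of_bool (u \<in> A \<inter> S)"
proof -
  have z_pos: "indicator_vector A (int u) = of_bool (u \<in> A)" for u
    unfolding indicator_vector_def by auto
  have z_m1: "indicator_vector A (-1) = 0" and z_0: "indicator_vector A 0 = 0"
    unfolding indicator_vector_def using A(1) by auto
  show "indicator_vector A \<in> pic n"
    unfolding pic_def indicator_vector_def using A(1) by force
  show "P (indicator_vector A) (-1) - indicator_vector A (-1) = 0"
    by (simp add: Phi_coord_m1)
  have "(\<Sum>u\<in>S. indicator_vector A (int (\<tau> u))) = (\<Sum>u\<in>S. of_bool (u \<in> A))"
    by (rule sum.cong) (simp_all add: z_pos A(2))
  also have "\<dots> = int (card (S \<inter> A))"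
    using finite_S by (simp add: of_bool_def sum.If_cases)
  finally show "P (indicator_vector A) 0 - indicator_vector A 0 = int (card (S \<inter> A))"
    by (simp add: Phi_coord_0 z_m1 z_0)
  show "P (indicator_vector A) (int u) - indicator_vector A (int u) = 2 * - of_bool (u \<in> A \<inter> S)"
    if "u \<in> {1..n}" for u
    using Phi_coord[OF that, of "indicator_vector A"] z_m1 z_pos[of u] z_pos[of "\<tau> u"] A(2)[of u]
    by (auto simp: eps_def)
qed

lemma sum_of_bool_Union_orbits:
  assumes V: "V \<subseteq> reps" and r: "r \<in> reps"
  shows "(\<Sum>u\<in>orbit \<tau> r. of_bool (u \<in> (\<Union>r'\<in>V. orbit \<tau> r') \<inter> S)) = of_bool (r \<in> V) * int (card (S \<inter> orbit \<tau> r))"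
proof (cases "r \<in> V")
  case True
  then have "(\<Sum>u\<in>orbit \<tau> r. of_bool (u \<in> (\<Union>r'\<in>V. orbit \<tau> r') \<inter> S)) = (\<Sum>u\<in>orbit \<tau> r. of_bool (u \<in> S))"
    by (intro sum.cong) auto
  also have "\<dots> = int (card (S \<inter> orbit \<tau> r))"
    using orbit_finite by (simp add: of_bool_def sum.If_cases Int_commute)
  finally show ?thesis
    using True by simp
next
  case False
  have "u \<notin> (\<Union>r'\<in>V. orbit \<tau> r')" if "u \<in> orbit \<tau> r" for u
    using orbits_disjoint[OF r] V False that by blast
  then show ?thesis
    using False by (simp add: sum.neutral)
qed

lemma even_card_S_Int_odd_cycles:
  assumes V: "V \<subseteq> odd_reps" "even (card V)"
  shows "even (card (S \<inter> (\<Union>r\<in>V. orbit \<tau> r)))"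
proof -
  have finite_V: "finite V"
    using V(1) finite_odd_reps finite_subset by blast
  have "card (\<Union>r\<in>V. S \<inter> orbit \<tau> r) = (\<Sum>r\<in>V. card (S \<inter> orbit \<tau> r))"
  proof (rule card_UN_disjoint[OF finite_V])
    show "\<forall>r\<in>V. finite (S \<inter> orbit \<tau> r)"
      using finite_S by blast
    show "\<forall>r\<in>V. \<forall>r'\<in>V. r \<noteq> r' \<longrightarrow> S \<inter> orbit \<tau> r \<inter> (S \<inter> orbit \<tau> r') = {}"
      using orbits_disjoint V(1) odd_reps_subset by blast
  qed
  moreover have "(\<Union>r\<in>V. S \<inter> orbit \<tau> r) = S \<inter> (\<Union>r\<in>V. orbit \<tau> r)"
    by blast
  moreover have "{r \<in> V. odd (card (S \<inter> orbit \<tau> r))} = V"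
    using V(1) unfolding odd_reps_def by blast
  ultimately show ?thesis
    using even_sum_iff[OF finite_V, of "\<lambda>r. card (S \<inter> orbit \<tau> r)"] V(2) by simp
qed

text \<open>Half of \<open>P z - z\<close>, for \<open>z\<close> the indicator vector of a union of an even number of
  odd cycles, is the value at \<open>P\<close> of a cocycle.\<close>

lemma cocycle_with_odd_cycle_parities:
  assumes V: "V \<subseteq> odd_reps" "even (card V)"
  obtains f where "f \<in> cocycles n powers" "\<And>r. r \<in> odd_reps \<Longrightarrow> odd (cycle_sum r (f P)) \<longleftrightarrow> r \<in> V"
proof -
  define A where "A = (\<Union>r\<in>V. orbit \<tau> r)"
  define z where "z = indicator_vector A"
  have V_reps: "V \<subseteq> reps"
    using V(1) odd_reps_subset by blast
  have A_subset: "A \<subseteq> {1..n}"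
    unfolding A_def using V_reps reps_subset orbit_subset by blast
  have A_step: "\<tau> u \<in> A \<longleftrightarrow> u \<in> A" for u
    unfolding A_def using step_in_orbit_iff by blast
  note D = Phi_minus_id_indicator_vector[OF A_subset A_step, folded z_def]
  have even_D: "even (P z j - z j)" for j
  proof -
    consider "j = -1" | "j = 0" | "j \<in> int ` {1..n}" | "j \<notin> {-1..int n}"
      using pic_range by blast
    then show ?thesis
    proof cases
      case 3
      then obtain u where "u \<in> {1..n}" "j = int u" by blast
      then show ?thesis
        using D(4) by simp
    next
      case 4
      then show ?thesis
        using D(1) Phi_pic[of z] unfolding pic_def by auto
    qed (use D(2,3) even_card_S_Int_odd_cycles[OF V] in \<open>simp_all add: A_def\<close>)
  qed
  define f where "f = (\<lambda>a\<in>powers. (\<lambda>j. (a z j - z j) div 2))"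
  have f: "f \<in> cocycles n powers"
    unfolding f_def by (rule half_coboundary_in_cocycles[OF D(1) even_D])
  have "odd (cycle_sum r (f P)) \<longleftrightarrow> r \<in> V" if r: "r \<in> odd_reps" for r
  proof -
    have rR: "r \<in> reps" and rn: "r \<in> {1..n}"
      using r odd_reps_subset reps_in by blast+
    have "cycle_sum r (f P) = (\<Sum>u\<in>orbit \<tau> r. - of_bool (u \<in> A \<inter> S))"
      unfolding cycle_sum_def f_def using generator_in_powers
      by (intro sum.cong) (simp_all only: restrict_apply' D(4)[OF orbit_in[OF rn]] nonzero_mult_div_cancel_left)
    also have "\<dots> = - of_bool (r \<in> V) * int (card (S \<inter> orbit \<tau> r))"
      unfolding sum_negf A_def sum_of_bool_Union_orbits[OF V_reps rR] by simp
    finally show ?thesis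
      using r unfolding odd_reps_def by simp
  qed
  with f show ?thesis
    by (rule that)
qed

text \<open>With \<open>e\<close> an enumeration of the odd cycles, coordinate \<open>i\<close> records whether the sums over
  the \<open>i\<close>-th and the \<open>(\<Lambda> - 2)\<close>-th odd cycle differ in parity; the parity on the last
  odd cycle is then determined, because the number of odd sums is even.\<close>

definition parity_hom :: "(nat \<Rightarrow> nat) \<Rightarrow> (((int \<Rightarrow> int) \<Rightarrow> int \<Rightarrow> int) \<Rightarrow> int \<Rightarrow> int) \<Rightarrow> nat \<Rightarrow> int" where
  "parity_hom e f =
    (\<lambda>i\<in>{..<card odd_reps - 2}. (cycle_sum (e i) (f P) + cycle_sum (e (card odd_reps - 2)) (f P)) mod 2)"

abbreviation parity_group :: "(nat \<Rightarrow> int) monoid" where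
  "parity_group \<equiv> product_group {..<card odd_reps - 2} (\<lambda>_. integer_mod_group 2)"

lemma group_hom_parity_hom: "group_hom (cocycle_group n powers) parity_group (parity_hom e)"
proof (rule group_hom.intro)
  show "group (cocycle_group n powers)"
    using comm_group_cocycle_group by (rule comm_group.axioms(2))
  show "group parity_group"
    by (rule product_group) simp
  show "group_hom_axioms (cocycle_group n powers) parity_group (parity_hom e)"
  proof (unfold_locales, rule homI)
    fix f assume "f \<in> carrier (cocycle_group n powers)"
    show "parity_hom e f \<in> carrier parity_group"
      unfolding parity_hom_def by (auto simp: carrier_integer_mod_group)
  next
    fix f g assume "f \<in> carrier (cocycle_group n powers)" "g \<in> carrier (cocycle_group n powers)"
    have "(f \<otimes>\<^bsub>cocycle_group n powers\<^esub> g) P = (\<lambda>j. f P j + g P j)"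
      unfolding cocycle_group_def using generator_in_powers by simp
    then show "parity_hom e (f \<otimes>\<^bsub>cocycle_group n powers\<^esub> g) = parity_hom e f \<otimes>\<^bsub>parity_group\<^esub> parity_hom e g"
      unfolding parity_hom_def
      by (auto simp: integer_mod_group_def cycle_sum_add mod_add_eq algebra_simps intro!: restrict_ext)
  qed
qed

lemma parity_hom_apply:
  "i < card odd_reps - 2 \<Longrightarrow> parity_hom e f i =
    of_bool (odd (cycle_sum (e i) (f P)) \<noteq> odd (cycle_sum (e (card odd_reps - 2)) (f P)))"
  unfolding parity_hom_def by simp presburger

lemma parity_hom_one_iff:
  "parity_hom e f = \<one>\<^bsub>parity_group\<^esub> \<longleftrightarrow>
    (\<forall>i < card odd_reps - 2. odd (cycle_sum (e i) (f P)) \<longleftrightarrow> odd (cycle_sum (e (card odd_reps - 2)) (f P)))"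
  by (auto simp: integer_mod_group_def fun_eq_iff parity_hom_apply) (simp add: parity_hom_def)

lemma kernel_parity_hom:
  assumes e: "bij_betw e {..<card odd_reps} odd_reps"
  shows "kernel (cocycle_group n powers) parity_group (parity_hom e) = coboundaries n powers"
proof -
  define L where "L = card odd_reps"
  have e_surj: "e ` {..<L} = odd_reps" and e_inj: "inj_on e {..<L}"
    using e unfolding L_def bij_betw_def by auto
  have "f \<in> coboundaries n powers \<longleftrightarrow> parity_hom e f = \<one>\<^bsub>parity_group\<^esub>"
    if f: "f \<in> cocycles n powers" for f
  proof -
    define s where "s i = odd (cycle_sum (e i) (f P))" for i
    have "{r \<in> odd_reps. odd (cycle_sum r (f P))} = e ` {i. i < L \<and> s i}"
      unfolding s_def e_surj[symmetric] by auto
    moreover have "inj_on e {i. i < L \<and> s i}"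
      using e_inj by (rule inj_on_subset) auto
    moreover have "even (card {r \<in> odd_reps. odd (cycle_sum r (f P))})"
      using cocycle_generator_constraints[OF f] by (intro even_card_odd_cycle_sums) simp_all
    ultimately have count: "even (card {i. i < L \<and> s i})"
      by (simp add: card_image)
    have "(\<forall>i < L - 2. s i \<longleftrightarrow> s (L - 2)) \<longleftrightarrow> (\<forall>i < L. s i \<longleftrightarrow> s (L - 2))"
    proof
      assume agree: "\<forall>i < L - 2. s i \<longleftrightarrow> s (L - 2)"
      show "\<forall>i < L. s i \<longleftrightarrow> s (L - 2)"
      proof (intro allI impI)
        fix i assume "i < L"
        moreover have "even L"
          using even_card_odd_reps unfolding L_def .
        ultimately show "s i \<longleftrightarrow> s (L - 2)"
          using all_agree_if_even_count[of L s i] count agree by blast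
      qed
    qed (meson diff_le_self order_less_le_trans)
    also have "\<dots> \<longleftrightarrow> (\<forall>r\<in>odd_reps. \<forall>r'\<in>odd_reps. odd (cycle_sum r (f P)) \<longleftrightarrow> odd (cycle_sum r' (f P)))"
    proof
      assume "\<forall>i < L. s i \<longleftrightarrow> s (L - 2)"
      then show "\<forall>r\<in>odd_reps. \<forall>r'\<in>odd_reps. odd (cycle_sum r (f P)) \<longleftrightarrow> odd (cycle_sum r' (f P))"
        unfolding s_def e_surj[symmetric] by blast
    next
      assume agree: "\<forall>r\<in>odd_reps. \<forall>r'\<in>odd_reps. odd (cycle_sum r (f P)) \<longleftrightarrow> odd (cycle_sum r' (f P))"
      show "\<forall>i < L. s i \<longleftrightarrow> s (L - 2)"
      proof (intro allI impI)
        fix i assume "i < L"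
        then have "e i \<in> odd_reps" "e (L - 2) \<in> odd_reps"
          using e_surj by auto
        with agree show "s i \<longleftrightarrow> s (L - 2)"
          unfolding s_def by blast
      qed
    qed
    finally show ?thesis
      unfolding coboundary_iff_odd_cycle_parities_agree[OF f] parity_hom_one_iff s_def L_def ..
  qed
  moreover have "carrier (cocycle_group n powers) = cocycles n powers"
    unfolding cocycle_group_def by simp
  ultimately show ?thesis
    unfolding kernel_def using coboundaries_subset_cocycles by blast
qed

lemma parity_hom_surj:
  assumes e: "bij_betw e {..<card odd_reps} odd_reps"
  shows "parity_hom e ` carrier (cocycle_group n powers) = carrier parity_group"
proof
  interpret group_hom "cocycle_group n powers" parity_group "parity_hom e"
    by (rule group_hom_parity_hom)
  show "parity_hom e ` carrier (cocycle_group n powers) \<subseteq> carrier parity_group"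
    using hom_closed by blast
  show "carrier parity_group \<subseteq> parity_hom e ` carrier (cocycle_group n powers)"
  proof
    fix t assume t: "t \<in> carrier parity_group"
    define L where "L = card odd_reps"
    have e_inj: "inj_on e {..<L}"
      using e unfolding L_def bij_betw_def by blast
    have e_in: "e i \<in> odd_reps" if "i < L" for i
      using bij_betw_apply[OF e] that unfolding L_def by blast
    obtain J where J: "J \<subseteq> {..<L}" "L - 2 \<notin> J" "even (card J)" "\<And>i. i < L - 2 \<Longrightarrow> i \<in> J \<longleftrightarrow> t i = 1"
      using even_completion[of "{i. i < L - 2 \<and> t i = 1}" L] by auto
    have e_J: "e i \<in> e ` J \<longleftrightarrow> i \<in> J" if "i < L" for i
      using inj_on_image_mem_iff[OF e_inj _ J(1)] that by simp
    have "e ` J \<subseteq> odd_reps"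
      using J(1) e_in by auto
    moreover have "even (card (e ` J))"
      using J(3) card_image[OF inj_on_subset[OF e_inj J(1)]] by simp
    ultimately obtain f where f: "f \<in> cocycles n powers"
      "\<And>r. r \<in> odd_reps \<Longrightarrow> odd (cycle_sum r (f P)) \<longleftrightarrow> r \<in> e ` J"
      by (rule cocycle_with_odd_cycle_parities) blast
    have "parity_hom e f i = t i" for i
    proof (cases "i < L - 2")
      case True
      then have "t i \<in> {0..<2}"
        using t unfolding L_def by (auto simp: carrier_integer_mod_group PiE_iff)
      moreover have "i < L" "L - 2 < L"
        using True by auto
      ultimately show ?thesis
        using True J(2,4) unfolding parity_hom_apply[OF True[unfolded L_def]] L_def[symmetric]
        by (auto simp: f(2) e_in e_J)
    next
      case False
      then show ?thesis
        using t unfolding parity_hom_def L_def by (auto simp: PiE_iff extensional_def)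
    qed
    then have "parity_hom e f = t"
      by (rule ext)
    with f show "t \<in> parity_hom e ` carrier (cocycle_group n powers)"
      by (auto simp: carrier_cocycle_group)
  qed
qed

end

lemma (in wd_element) H1_iso_parity_group: "H1 n (cyc n \<tau> S) \<cong> parity_group"
  and group_H1: "group (H1 n (cyc n \<tau> S))"
proof -
  obtain e where e: "bij_betw e {..<card odd_reps} odd_reps"
    using ex_bij_betw_nat_finite[OF finite_odd_reps] by (auto simp: atLeast0LessThan)
  interpret h: group_hom "cocycle_group n powers" parity_group "parity_hom e"
    by (rule group_hom_parity_hom)
  show "H1 n (cyc n \<tau> S) \<cong> parity_group"
    unfolding H1_def cyc_eq_powers kernel_parity_hom[OF e, symmetric]
    by (rule h.FactGroup_iso[OF parity_hom_surj[OF e]])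
  show "group (H1 n (cyc n \<tau> S))"
    unfolding H1_def cyc_eq_powers kernel_parity_hom[OF e, symmetric]
    by (rule normal.factorgroup_is_group[OF h.normal_kernel])
qed

theorem proposition4p1:
  fixes n :: nat and \<tau> :: "nat \<Rightarrow> nat" and S :: "nat set"
  assumes "in_WD n \<tau> S"
  shows "(Lambda n \<tau> S = 0 \<or> Lambda n \<tau> S = 2 \<longrightarrow> trivial_group (H1 n (cyc n \<tau> S)))
       \<and> (\<not> (Lambda n \<tau> S = 0 \<or> Lambda n \<tau> S = 2) \<longrightarrow>
            H1 n (cyc n \<tau> S) \<cong> product_group {..<Lambda n \<tau> S - 2} (\<lambda>_. integer_mod_group 2))"
proof -
  interpret wd_element n \<tau> S
    by (rule wd_element.intro) (rule assms)
  have iso: "H1 n (cyc n \<tau> S) \<cong> product_group {..<Lambda n \<tau> S - 2} (\<lambda>_. integer_mod_group 2)"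
    using H1_iso_parity_group by (simp add: Lambda_eq_card_odd_reps)
  moreover have "Lambda n \<tau> S - 2 = 0 \<Longrightarrow> trivial_group (H1 n (cyc n \<tau> S))"
    using isomorphic_group_triviality[OF iso group_H1 product_group] by (simp add: trivial_product_group)
  ultimately show ?thesis
    by auto
qed

end
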